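(* Under all the hypotheses of the I-UKF stability theorem recalled in the context (conditions (C1)–(C8) together with the standing assumptions listed there), the Jacobian of the $i$-th forward-UKF measurement-update sigma point $\mathbf{q}_{i,k+1|k}$ with respect to the forward state estimate $\hat{\mathbf{x}}_k$ (with $\boldsymbol{\Sigma}_k$ held fixed) satisfies $\left\|\frac{\partial\mathbf{q}_{i,k+1|k}}{\partial\hat{\mathbf{x}}_k}\right\|\le c'$ for all $k\ge0$ and all $0\le i\le 2n_x$, for some positive real constant $c'$.
   Context: Forward system $\mathbf{x}_{k+1}=f(\mathbf{x}_k)+\mathbf{w}_k$, $\mathbf{y}_k=h(\mathbf{x}_k)+\mathbf{v}_k$ with $f:\mathbb{R}^{n_x}\to\mathbb{R}^{n_x}$, $h:\mathbb{R}^{n_x}\to\mathbb{R}^{n_y}$ differentiable, $\mathbf{w}_k\sim\mathcal{N}(\mathbf{0},\mathbf{Q}_k)$, $\mathbf{v}_k\sim\mathcal{N}(\mathbf{0},\mathbf{R}_k)$; defender observation $\mathbf{a}_k=g(\hat{\mathbf{x}}_k)+\boldsymbol{\epsilon}_k$, $\boldsymbol{\epsilon}_k\sim\mathcal{N}(\mathbf{0},\overline{\mathbf{R}}_k)$, $g$ differentiable. Sigma points with parameter $\kappa$: $S_{gen}(\hat{\mathbf{x}},\boldsymbol{\Sigma})$ consists of $\hat{\mathbf{x}}$ and $\hat{\mathbf{x}}\pm[\sqrt{(n_x+\kappa)\boldsymbol{\Sigma}}]_{(:,i)}$, $1\le i\le n_x$ ($\sqrt{\cdot}$ the lower-triangular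 Cholesky factor), weights $\omega_0=\kappa/(n_x+\kappa)$, $\omega_i=1/(2(n_x+\kappa))$. Forward UKF: $\{\mathbf{s}_{i,k}\}=S_{gen}(\hat{\mathbf{x}}_k,\boldsymbol{\Sigma}_k)$, $\mathbf{s}^*_{i,k+1|k}=f(\mathbf{s}_{i,k})$, $\hat{\mathbf{x}}_{k+1|k}=\sum_i\omega_i\mathbf{s}^*_{i,k+1|k}$, $\boldsymbol{\Sigma}_{k+1|k}=\sum_i\omega_i\mathbf{s}^*_i\mathbf{s}^{*T}_i-\hat{\mathbf{x}}_{k+1|k}\hat{\mathbf{x}}_{k+1|k}^T+\mathbf{Q}_k$, $\{\mathbf{q}_{i,k+1|k}\}=S_{gen}(\hat{\mathbf{x}}_{k+1|k},\boldsymbol{\Sigma}_{k+1|k})$, $\mathbf{q}^*_i=h(\mathbf{q}_i)$, $\hat{\mathbf{y}}_{k+1|k}=\sum\omega_i\mathbf{q}^*_i$, $\boldsymbol{\Sigma}^y_{k+1}=\sum\omega_i\mathbf{q}^*_i\mathbf{q}^{*T}_i-\hat{\mathbf{y}}\hat{\mathbf{y}}^T+\mathbf{R}_{k+1}$, $\boldsymbol{\Sigma}^{xy}_{k+1}=\sum\omega_i\mathbf{q}_i\mathbf{q}^{*T}_i-\hat{\mathbf{x}}_{k+1|k}\hat{\mathbf{y}}^T$, $\mathbf{K}_{k+1}=\boldsymbol{\Sigma}^{xy}(\boldsymbol{\Sigma}^y)^{-1}$, $\hat{\mathbf{x}}_{k+1}=\hat{\mathbf{x}}_{k+1|k}+\mathbf{K}_{k+1}(\mathbf{y}_{k+1}-\hat{\mathbf{y}}_{k+1|k})$,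 $\boldsymbol{\Sigma}_{k+1}=\boldsymbol{\Sigma}_{k+1|k}-\mathbf{K}\boldsymbol{\Sigma}^y\mathbf{K}^T$. $\mathbf{F}_k=\frac{\partial f}{\partial\mathbf{x}}(\hat{\mathbf{x}}_k)$, $\mathbf{H}_{k+1}=\frac{\partial h}{\partial\mathbf{x}}(\hat{\mathbf{x}}_{k+1|k})$; unknown diagonal $\mathbf{U}^x_k,\mathbf{U}^y_k$ and matrices $\mathbf{U}^{xy}_k$ satisfy $\mathbf{x}_{k+1}-\hat{\mathbf{x}}_{k+1|k}=\mathbf{U}^x_k\mathbf{F}_k(\mathbf{x}_k-\hat{\mathbf{x}}_k)+\mathbf{w}_k$, $\mathbf{y}_{k+1}-\hat{\mathbf{y}}_{k+1|k}=\mathbf{U}^y_{k+1}\mathbf{H}_{k+1}(\mathbf{x}_{k+1}-\hat{\mathbf{x}}_{k+1|k})+\mathbf{v}_{k+1}$, $\boldsymbol{\Sigma}^{xy}_{k+1}=\boldsymbol{\Sigma}_{k+1|k}\mathbf{U}^{xy}_{k+1}\mathbf{H}_{k+1}^T\mathbf{U}^y_{k+1}$ (if $n_x\ge n_y$, else $\boldsymbol{\Sigma}_{k+1|k}\mathbf{H}_{k+1}^T\mathbf{U}^y_{k+1}\mathbf{U}^{xy}_{k+1}$); $\hat{\mathbf{Q}}_k,\hat{\mathbf{R}}_{k+1}$ defined by $\boldsymbol{\Sigma}_{k+1|k}=\mathbf{U}^x_k\mathbf{F}_k(\mathbf{I}-\mathbf{K}_k\mathbf{U}^y_k\mathbf{H}_k)\boldsymbol{\Sigma}_{k|k-1}(\cdot)^T\mathbf{F}_k^T\mathbf{U}^x_k+\hat{\mathbf{Q}}_k$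 (with $(\cdot)=\mathbf{I}-\mathbf{K}_k\mathbf{U}^y_k\mathbf{H}_k$) and $\boldsymbol{\Sigma}^y_{k+1}=\mathbf{U}^y_{k+1}\mathbf{H}_{k+1}\boldsymbol{\Sigma}_{k+1|k}\mathbf{H}_{k+1}^T\mathbf{U}^y_{k+1}+\hat{\mathbf{R}}_{k+1}$. I-UKF: the defender's filter estimating $\hat{\mathbf{x}}_k$ from $\mathbf{a}_k$ and $\mathbf{x}_k$, with state transition $\hat{\mathbf{x}}_{k+1}=\widetilde f(\hat{\mathbf{x}}_k,\boldsymbol{\Sigma}_k,\mathbf{x}_{k+1},\mathbf{v}_{k+1}):=\sum_i\omega_i(\mathbf{s}^*_{i,k+1|k}-\mathbf{K}_{k+1}\mathbf{q}^*_{i,k+1|k})+\mathbf{K}_{k+1}h(\mathbf{x}_{k+1})+\mathbf{K}_{k+1}\mathbf{v}_{k+1}$ and observation $\mathbf{a}_k$; it produces $\hat{\hat{\mathbf{x}}}_k$, $\hat{\hat{\mathbf{x}}}_{k|k-1}$, $\overline{\boldsymbol{\Sigma}}_{k|k-1}$, with $\widetilde{\mathbf{F}}_k=\frac{\partial\widetilde f(\mathbf{x},\boldsymbol{\Sigma}_k,\mathbf{x}_{k+1},\mathbf{0})}{\partial\mathbf{x}}|_{\mathbf{x}=\hat{\hat{\mathbf{x}}}_k}$, $\mathbf{G}_k=\frac{\partial g}{\partial\mathbf{x}}(\hat{\hat{\mathbf{x}}}_{k|k-1})$ and unknown matrices $\overline{\mathbf{U}}^a_k,\overline{\mathbf{U}}^{xa}_k$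 and $\hat{\overline{\mathbf{Q}}}_k,\hat{\overline{\mathbf{R}}}_k$ being the I-UKF counterparts of $\mathbf{U}^y,\mathbf{U}^{xy},\hat{\mathbf{Q}},\hat{\mathbf{R}}$. The hypotheses: (C1) positive reals with $\|\mathbf{F}_k\|\le\bar f$, $\|\mathbf{H}_k\|\le\bar h$, $\|\mathbf{U}^x_k\|\le\bar\alpha$, $\|\mathbf{U}^y_k\|\le\bar\beta$, $\|\mathbf{U}^{xy}_k\|\le\bar\gamma$, $\mathbf{Q}_k\preceq\bar q\mathbf{I}$, $\mathbf{R}_k\preceq\bar r\mathbf{I}$, $\hat q\mathbf{I}\preceq\hat{\mathbf{Q}}_k$, $\hat r\mathbf{I}\preceq\hat{\mathbf{R}}_k$, $\underline{\sigma}\mathbf{I}\preceq\boldsymbol{\Sigma}_{k|k-1}\preceq\bar\sigma\mathbf{I}$; (C2) $\mathbf{U}^x_k,\mathbf{F}_k$ non-singular; (C3) $\bar\sigma\bar\gamma\bar h^2\bar\beta^2<\hat r$; (C4) positive reals with $\|\mathbf{G}_k\|\le\bar g$, $\|\overline{\mathbf{U}}^a_k\|\le\bar c$, $\|\overline{\mathbf{U}}^{xa}_k\|\le\bar d$, $\overline{\mathbf{R}}_k\preceq\bar\epsilon\mathbf{I}$, $\hat c\mathbf{I}\preceq\hat{\overline{\mathbf{Q}}}_k$, $\hat d\mathbf{I}\preceq\hat{\overline{\mathbf{R}}}_k$, $\underline{p}\mathbf{I}\preceq\overline{\boldsymbol{\Sigma}}_{k|k-1}\preceq\bar p\mathbf{I}$;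 (C5) $\boldsymbol{\Sigma}^y_k\succeq\underline{y}\mathbf{I}$ for a real constant $\underline{y}$; (C6) $\|f(\cdot)\|_2\le\delta_f$, $\|h(\cdot)\|_2\le\delta_h$; (C7) $\widetilde{\mathbf{F}}_k$ non-singular with $\|\widetilde{\mathbf{F}}_k^{-1}\|\le\bar a$; (C8) $\bar p\bar d\bar g^2\bar c^2<\hat d$; all for every $k\ge0$. Standing assumptions: the I-UKF's approximation of $\boldsymbol{\Sigma}_k$ is exact, the forward gain computed at the I-UKF estimate equals that at $\hat{\mathbf{x}}_k$, and $\|\frac{\partial f}{\partial\mathbf{x}}(\mathbf{x})\|\le\bar f$, $\|\frac{\partial h}{\partial\mathbf{x}}(\mathbf{x})\|\le\bar h$ at every point where they are evaluated, in particular every sigma point. *)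

theory Defs
  imports "HOL-Analysis.Analysis"
begin

definition mnorm :: "real^'n^'m \<Rightarrow> real" where
  "mnorm A = onorm (\<lambda>v. A *v v)"

definition loewner_le :: "real^'n^'n \<Rightarrow> real^'n^'n \<Rightarrow> bool" where
  "loewner_le A B \<longleftrightarrow> (\<forall>v. v \<bullet> (A *v v) \<le> v \<bullet> (B *v v))"

definition diag_mat :: "real^'n^'n \<Rightarrow> bool" where
  "diag_mat A \<longleftrightarrow> (\<forall>i j. i \<noteq> j \<longrightarrow> A $ i $ j = 0)"

definition lower_tri :: "real^('n::{finite,linorder})^('n::{finite,linorder}) \<Rightarrow> bool" where
  "lower_tri L \<longleftrightarrow> (\<forall>i j. i < j \<longrightarrow> L $ i $ j = 0)"

definition chol :: "real^('n::{finite,linorder})^('n::{finite,linorder}) \<Rightarrow> real^('n::{finite,linorder})^('n::{finite,linorder})" where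
  "chol A = (THE L. lower_tri L \<and> (\<forall>i. 0 < L $ i $ i) \<and> L ** transpose L = A)"

definition idx :: "nat \<Rightarrow> ('n::{finite,linorder})" where
  "idx j = sorted_list_of_set (UNIV :: 'n set) ! j"

definition outer :: "real^'a \<Rightarrow> real^'b \<Rightarrow> real^'b^'a" where
  "outer u v = (\<chi> i j. u $ i * v $ j)"

definition sigma_pt :: "real \<Rightarrow> real^('n::{finite,linorder}) \<Rightarrow> real^('n::{finite,linorder})^('n::{finite,linorder}) \<Rightarrow> nat \<Rightarrow> real^('n::{finite,linorder})" where
  "sigma_pt \<kappa> x S i =
     (let L = chol ((real CARD('n) + \<kappa>) *\<^sub>R S); n = CARD('n) in
      if i = 0 then x
      else if i \<le> n then x + column (idx (i - 1)) L
      else x - column (idx (i - n - 1)) L)"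

definition sigma_wt :: "nat \<Rightarrow> real \<Rightarrow> nat \<Rightarrow> real" where
  "sigma_wt n \<kappa> i = (if i = 0 then \<kappa> / (real n + \<kappa>) else 1 / (2 * (real n + \<kappa>)))"

definition ut_mean :: "real \<Rightarrow> (real^('n::{finite,linorder}) \<Rightarrow> real^'m) \<Rightarrow> real^('n::{finite,linorder}) \<Rightarrow> real^('n::{finite,linorder})^('n::{finite,linorder}) \<Rightarrow> real^'m" where
  "ut_mean \<kappa> \<phi> x S = (\<Sum>i\<le>2 * CARD('n). sigma_wt CARD('n) \<kappa> i *\<^sub>R \<phi> (sigma_pt \<kappa> x S i))"

definition ut_cov :: "real \<Rightarrow> (real^('n::{finite,linorder}) \<Rightarrow> real^'m) \<Rightarrow> real^('n::{finite,linorder}) \<Rightarrow> real^('n::{finite,linorder})^('n::{finite,linorder}) \<Rightarrow> real^'m^'m" where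
  "ut_cov \<kappa> \<phi> x S =
     (\<Sum>i\<le>2 * CARD('n). sigma_wt CARD('n) \<kappa> i *\<^sub>R outer (\<phi> (sigma_pt \<kappa> x S i)) (\<phi> (sigma_pt \<kappa> x S i)))
     - outer (ut_mean \<kappa> \<phi> x S) (ut_mean \<kappa> \<phi> x S)"

definition ut_cross :: "real \<Rightarrow> (real^('n::{finite,linorder}) \<Rightarrow> real^'m) \<Rightarrow> real^('n::{finite,linorder}) \<Rightarrow> real^('n::{finite,linorder})^('n::{finite,linorder}) \<Rightarrow> real^'m^('n::{finite,linorder})" where
  "ut_cross \<kappa> \<phi> x S =
     (\<Sum>i\<le>2 * CARD('n). sigma_wt CARD('n) \<kappa> i *\<^sub>R outer (sigma_pt \<kappa> x S i) (\<phi> (sigma_pt \<kappa> x S i)))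
     - outer x (ut_mean \<kappa> \<phi> x S)"

text \<open>I-UKF state transition  f~(z, Sigma_k, x_{k+1}, 0), with the forward gain K_{k+1}
  (the one computed at the forward estimate) and Sigma_k, Q_k given.\<close>
definition itrans :: "real \<Rightarrow> (real^('n::{finite,linorder}) \<Rightarrow> real^('n::{finite,linorder})) \<Rightarrow> (real^('n::{finite,linorder}) \<Rightarrow> real^'m)
    \<Rightarrow> real^('n::{finite,linorder})^('n::{finite,linorder}) \<Rightarrow> real^('n::{finite,linorder})^('n::{finite,linorder}) \<Rightarrow> real^'m^('n::{finite,linorder}) \<Rightarrow> real^('n::{finite,linorder}) \<Rightarrow> real^('n::{finite,linorder}) \<Rightarrow> real^('n::{finite,linorder})" where
  "itrans \<kappa> f h Qk Sk Kk1 xk1 z =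
     (\<Sum>i\<le>2 * CARD('n). sigma_wt CARD('n) \<kappa> i *\<^sub>R
        (f (sigma_pt \<kappa> z Sk i)
         - Kk1 *v h (sigma_pt \<kappa> (ut_mean \<kappa> f z Sk) (ut_cov \<kappa> f z Sk + Qk) i)))
     + Kk1 *v h xk1"

end

theory Submission
  imports Defs
begin

text \<open>
  For i > 0 the sigma point q_{i,k+1|k} is the predicted mean plus or minus a column of
  chol ((n + \<kappa>) \<Sigma>_{k+1|k}), and both the predicted mean and \<Sigma>_{k+1|k} are unscented transforms of
  f around the estimate. Their derivatives are weighted sums, over the sigma points, of f' and of
  products of f with f', hence bounded by (C6) and the Jacobian bound at the sigma points.
  The Cholesky factor is a differentiable function of a positive definite matrix: the map
  L \<mapsto> L L^T, extended to all square matrices, is a continuous injection on matrices with positive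
  diagonal, so by invariance of domain its image is open and by the inverse function theorem its
  inverse is differentiable, with a derivative controlled by the bounds
  \<sigma>l I \<preceq> \<Sigma>_{k+1|k} \<preceq> \<sigma>b I of (C1). None of the resulting constants depends on k.
\<close>

section \<open>Lower triangular matrices\<close>

lemma matrix_mult_entry: "(A ** B) $ i $ j = (\<Sum>k\<in>UNIV. A $ i $ k * B $ k $ j)"
  by (simp add: matrix_matrix_mult_def)

lemma transpose_entry [simp]: "transpose A $ i $ j = A $ j $ i"
  by (simp add: transpose_def)

text \<open>
  The state index type is only a finite linear order, not a wellorder, so neither less_induct
  nor the library's det_lowerdiagonal applies to it.
\<close>

lemma finite_linorder_less_induct [case_names less]:
  fixes P :: "'a::{finite,linorder} \<Rightarrow> bool"
  assumes step: "\<And>j. (\<And>k. k < j \<Longrightarrow> P k) \<Longrightarrow> P j"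
  shows "P j"
proof (induction "card {k. k < j}" arbitrary: j rule: less_induct)
  case less
  show ?case
  proof (rule step)
    fix k assume "k < j"
    then have "{k'. k' < k} \<subset> {k'. k' < j}" by auto
    then show "P k" using less by (simp add: psubset_card_mono)
  qed
qed

lemma sum_UNIV_eq_single:
  fixes g :: "'a::finite \<Rightarrow> 'b::comm_monoid_add"
  assumes "\<And>k. k \<noteq> j \<Longrightarrow> g k = 0"
  shows "(\<Sum>k\<in>UNIV. g k) = g j"
  using sum.mono_neutral_right[of UNIV "{j}" g] assms by auto

lemma lower_tri_mult:
  fixes A B :: "real^('n::{finite,linorder})^('n::{finite,linorder})"
  assumes "lower_tri A" and "lower_tri B"
  shows "lower_tri (A ** B)"
  unfolding lower_tri_def matrix_mult_entry
proof (intro allI impI sum.neutral ballI)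
  fix i j k :: 'n assume "i < j"
  then have "i < k \<or> k < j" by (meson not_less less_le_trans)
  then show "A $ i $ k * B $ k $ j = 0"
    using assms by (auto simp: lower_tri_def)
qed

lemma lower_tri_right_inverse:
  fixes L N :: "real^('n::{finite,linorder})^('n::{finite,linorder})"
  assumes L: "lower_tri L" and diag: "\<forall>i. L $ i $ i \<noteq> 0" and LN: "L ** N = mat 1"
  shows "lower_tri N"
proof -
  have "\<forall>j. i < j \<longrightarrow> N $ i $ j = 0" for i
  proof (induction i rule: finite_linorder_less_induct)
    case (less i)
    show ?case
    proof (intro allI impI)
      fix j assume "i < j"
      have "(\<Sum>k\<in>UNIV. L $ i $ k * N $ k $ j) = L $ i $ i * N $ i $ j"
      proof (rule sum_UNIV_eq_single)
        fix k assume "k \<noteq> i"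
        then have "k < i \<and> k < j \<or> i < k" using \<open>i < j\<close> by auto
        then show "L $ i $ k * N $ k $ j = 0" using less.IH L by (auto simp: lower_tri_def)
      qed
      moreover have "(\<Sum>k\<in>UNIV. L $ i $ k * N $ k $ j) = 0"
        using arg_cong[OF LN, of "\<lambda>M. M $ i $ j"] \<open>i < j\<close> by (simp add: matrix_mult_entry mat_def)
      ultimately show "N $ i $ j = 0" using diag by simp
    qed
  qed
  then show ?thesis by (simp add: lower_tri_def)
qed

lemma permutes_ex_less_image:
  fixes p :: "'a::{finite,linorder} \<Rightarrow> 'a"
  assumes p: "p permutes UNIV" and "p \<noteq> id"
  shows "\<exists>i. i < p i"
proof (rule ccontr)
  assume "\<not> ?thesis"
  then have le: "p i \<le> i" for i by (simp add: not_less)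
  define m where "m = Min {i. p i \<noteq> i}"
  have "{i. p i \<noteq> i} \<noteq> {}" using \<open>p \<noteq> id\<close> by (auto simp: fun_eq_iff)
  then have m: "p m \<noteq> m"
    unfolding m_def by (metis (mono_tags) Min_in finite mem_Collect_eq)
  have "p m < m" using m le[of m] by simp
  then have "p (p m) = p m"
    unfolding m_def by (metis (mono_tags) Min_le finite leD mem_Collect_eq)
  then show False using m permutes_inj[OF p] by (simp add: inj_eq)
qed

lemma det_lower_tri:
  fixes L :: "real^('n::{finite,linorder})^('n::{finite,linorder})"
  assumes "lower_tri L"
  shows "det L = (\<Prod>i\<in>UNIV. L $ i $ i)"
proof -
  let ?PU = "{p. p permutes (UNIV :: 'n set)}"
  have "\<forall>p \<in> ?PU - {id}. of_int (sign p) * (\<Prod>i\<in>UNIV. L $ i $ p i) = 0"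
  proof
    fix p assume "p \<in> ?PU - {id}"
    then obtain i where "i < p i" using permutes_ex_less_image by blast
    then have "L $ i $ p i = 0" using assms by (simp add: lower_tri_def)
    then show "of_int (sign p) * (\<Prod>i\<in>UNIV. L $ i $ p i) = 0"
      using prod_zero[of UNIV "\<lambda>i. L $ i $ p i"] by force
  qed
  from sum.mono_neutral_cong_left[OF finite_permutations[of UNIV] _ this]
  show ?thesis unfolding det_def by (simp add: sign_id permutes_id)
qed

lemma invertible_lower_tri:
  fixes L :: "real^('n::{finite,linorder})^('n::{finite,linorder})"
  assumes "lower_tri L" and "\<forall>i. L $ i $ i \<noteq> 0"
  shows "invertible L"
  using assms by (simp add: invertible_det_nz det_lower_tri)

definition is_chol_factor ::
    "real^('n::{finite,linorder})^('n::{finite,linorder}) \<Rightarrow> real^('n::{finite,linorder})^('n::{finite,linorder}) \<Rightarrow> bool" where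
  "is_chol_factor L A \<longleftrightarrow> lower_tri L \<and> (\<forall>i. 0 < L $ i $ i) \<and> L ** transpose L = A"

lemma lower_tri_factor_unique:
  fixes L1 L2 :: "real^('n::{finite,linorder})^('n::{finite,linorder})"
  assumes l1: "lower_tri L1" and p1: "\<forall>i. 0 < L1 $ i $ i"
    and l2: "lower_tri L2" and p2: "\<forall>i. 0 < L2 $ i $ i"
    and eq: "L1 ** transpose L1 = L2 ** transpose L2"
  shows "L1 = L2"
proof -
  have "\<forall>i. L1 $ i $ j = L2 $ i $ j" for j
  proof (induction j rule: finite_linorder_less_induct)
    case (less j)
    have entry: "L1 $ i $ j * L1 $ j $ j - L2 $ i $ j * L2 $ j $ j = 0" for i
    proof -
      have "(\<Sum>k\<in>UNIV. L1 $ i $ k * L1 $ j $ k - L2 $ i $ k * L2 $ j $ k) = 0"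
        using arg_cong[OF eq, of "\<lambda>M. M $ i $ j"] by (simp add: matrix_mult_entry sum_subtractf)
      moreover have "(\<Sum>k\<in>UNIV. L1 $ i $ k * L1 $ j $ k - L2 $ i $ k * L2 $ j $ k)
          = L1 $ i $ j * L1 $ j $ j - L2 $ i $ j * L2 $ j $ j"
      proof (rule sum_UNIV_eq_single)
        fix k assume "k \<noteq> j"
        then consider "k < j" | "j < k" by fastforce
        then show "L1 $ i $ k * L1 $ j $ k - L2 $ i $ k * L2 $ j $ k = 0"
        proof cases
          case 1 then show ?thesis using less.IH by simp
        next
          case 2 then show ?thesis using l1 l2 by (simp add: lower_tri_def)
        qed
      qed
      ultimately show ?thesis by simp
    qed
    have diag: "L1 $ j $ j = L2 $ j $ j"
    proof -
      have "(L1 $ j $ j)\<^sup>2 = (L2 $ j $ j)\<^sup>2" using entry[of j] by (simp add: power2_eq_square)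
      then show ?thesis using p1 p2 by (meson less_le power2_eq_iff_nonneg)
    qed
    show ?case
    proof
      fix i
      have "(L1 $ i $ j - L2 $ i $ j) * L2 $ j $ j = 0" using entry[of i] diag by (simp add: algebra_simps)
      then show "L1 $ i $ j = L2 $ i $ j" using p2 by (metis eq_iff_diff_eq_0 less_irrefl mult_eq_0_iff)
    qed
  qed
  then show ?thesis by (simp add: vec_eq_iff)
qed

lemma chol_eqI:
  assumes "is_chol_factor L A"
  shows "chol A = L"
  unfolding chol_def is_chol_factor_def[symmetric]
proof (rule the_equality)
  show "is_chol_factor L A" by (rule assms)
  fix L' assume "is_chol_factor L' A"
  then show "L' = L" using assms lower_tri_factor_unique[of L' L] by (auto simp: is_chol_factor_def)
qed

section \<open>Differentiability of the Cholesky factor\<close>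

definition tril :: "real^('n::{finite,linorder})^('n::{finite,linorder}) \<Rightarrow> real^('n::{finite,linorder})^('n::{finite,linorder})" where
  "tril M = (\<chi> i j. if j \<le> i then M $ i $ j else 0)"

definition triu_strict :: "real^('n::{finite,linorder})^('n::{finite,linorder}) \<Rightarrow> real^('n::{finite,linorder})^('n::{finite,linorder})" where
  "triu_strict M = (\<chi> i j. if i < j then M $ i $ j else 0)"

definition pos_diag :: "(real^('n::{finite,linorder})^('n::{finite,linorder})) set" where
  "pos_diag = {M. \<forall>i. 0 < M $ i $ i}"

text \<open>
  Extends L \<mapsto> L L^T from lower triangular to all square matrices. Restricted to pos_diag it is
  a continuous injection between spaces of the same dimension, so invariance of domain and the
  inverse function theorem apply to it.
\<close>

definition chol_ext :: "real^('n::{finite,linorder})^('n::{finite,linorder}) \<Rightarrow> real^('n::{finite,linorder})^('n::{finite,linorder})" where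
  "chol_ext M = tril M ** transpose (tril M) + (triu_strict M - transpose (triu_strict M))"

definition chol_ext_deriv ::
    "real^('n::{finite,linorder})^('n::{finite,linorder}) \<Rightarrow> real^('n::{finite,linorder})^('n::{finite,linorder}) \<Rightarrow> real^('n::{finite,linorder})^('n::{finite,linorder})" where
  "chol_ext_deriv L X =
     tril X ** transpose (tril L) + tril L ** transpose (tril X) + (triu_strict X - transpose (triu_strict X))"

lemma transpose_zero [simp]: "transpose 0 = 0"
  by (simp add: vec_eq_iff)

lemma tril_entry [simp]: "tril M $ i $ j = (if j \<le> i then M $ i $ j else 0)"
  by (simp add: tril_def)

lemma triu_strict_entry [simp]: "triu_strict M $ i $ j = (if i < j then M $ i $ j else 0)"
  by (simp add: triu_strict_def)

lemma tril_add_triu_strict: "tril M + triu_strict M = M"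
  by (simp add: vec_eq_iff not_le) (meson leD)

lemma lower_tri_tril: "lower_tri (tril M)"
  by (simp add: lower_tri_def) (meson leD)

lemma tril_lower_tri: "lower_tri L \<Longrightarrow> tril L = L"
  by (auto simp: vec_eq_iff lower_tri_def)

lemma triu_strict_lower_tri: "lower_tri L \<Longrightarrow> triu_strict L = 0"
  by (auto simp: vec_eq_iff lower_tri_def)

lemma bounded_linear_tril: "bounded_linear tril"
  by (rule linear_conv_bounded_linear[THEN iffD1], rule linearI) (auto simp: vec_eq_iff)

lemma bounded_linear_triu_strict: "bounded_linear triu_strict"
  by (rule linear_conv_bounded_linear[THEN iffD1], rule linearI) (auto simp: vec_eq_iff)

lemma bounded_linear_transpose: "bounded_linear (transpose :: real^('n::finite)^('m::finite) \<Rightarrow> _)"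
  by (rule linear_conv_bounded_linear[THEN iffD1], rule linearI) (auto simp: vec_eq_iff)

lemma bounded_bilinear_matrix_mult:
  "bounded_bilinear ((**) :: real^('n::finite)^('m::finite) \<Rightarrow> real^('p::finite)^'n \<Rightarrow> real^'p^'m)"
proof -
  have "linear (\<lambda>B. (A :: real^'n^'m) ** (B :: real^'p^'n))" for A
    by (rule linearI) (simp_all add: matrix_add_ldistrib matrix_scalar_ac scalar_matrix_assoc)
  moreover have "linear (\<lambda>A. (A :: real^'n^'m) ** (B :: real^'p^'n))" for B
    by (rule linearI)
      (simp_all add: vec_eq_iff matrix_mult_entry sum.distrib distrib_right sum_distrib_left mult.assoc)
  ultimately have "bilinear ((**) :: real^'n^'m \<Rightarrow> real^'p^'n \<Rightarrow> real^'p^'m)"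
    unfolding bilinear_def by blast
  then show ?thesis by (simp add: bilinear_conv_bounded_bilinear)
qed

lemma matrix_mult_transpose_entry_swap:
  "((A :: real^('n::finite)^('m::finite)) ** transpose B) $ j $ i = (B ** transpose A) $ i $ j"
  by (simp add: matrix_mult_entry mult.commute)

lemma has_derivative_chol_ext: "(chol_ext has_derivative chol_ext_deriv L) (at L)"
proof -
  have tril: "(tril has_derivative tril) (at L)"
    using bounded_linear_tril by (rule bounded_linear_imp_has_derivative)
  have triu: "(triu_strict has_derivative triu_strict) (at L)"
    using bounded_linear_triu_strict by (rule bounded_linear_imp_has_derivative)
  note transp = bounded_linear.has_derivative[OF bounded_linear_transpose]
  have "((\<lambda>M. tril M ** transpose (tril M)) has_derivative
      (\<lambda>X. tril L ** transpose (tril X) + tril X ** transpose (tril L))) (at L)"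
    by (rule bounded_bilinear.FDERIV[OF bounded_bilinear_matrix_mult tril transp[OF tril]])
  from has_derivative_add[OF this has_derivative_diff[OF triu transp[OF triu]]] show ?thesis
    unfolding chol_ext_def chol_ext_deriv_def by (simp add: algebra_simps)
qed

lemma continuous_on_chol_ext: "continuous_on S chol_ext"
  using has_derivative_chol_ext
  by (intro has_derivative_continuous_on) (auto intro: has_derivative_at_withinI)

lemma chol_ext_antisym_entry: "i < j \<Longrightarrow> chol_ext M $ i $ j - chol_ext M $ j $ i = 2 * M $ i $ j"
  unfolding chol_ext_def using matrix_mult_transpose_entry_swap[of "tril M" "tril M" j i] by simp

lemma chol_ext_deriv_antisym_entry:
  "i < j \<Longrightarrow> chol_ext_deriv L X $ i $ j - chol_ext_deriv L X $ j $ i = 2 * X $ i $ j"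
  unfolding chol_ext_deriv_def
  using matrix_mult_transpose_entry_swap[of "tril X" "tril L" j i]
    matrix_mult_transpose_entry_swap[of "tril L" "tril X" j i]
  by simp

lemma chol_ext_lower_tri: "lower_tri L \<Longrightarrow> chol_ext L = L ** transpose L"
  by (simp add: chol_ext_def tril_lower_tri triu_strict_lower_tri)

lemma lower_tri_if_symmetric_chol_ext:
  assumes "transpose (chol_ext M) = chol_ext M"
  shows "lower_tri M"
proof -
  have "M $ i $ j = 0" if "i < j" for i j
    using chol_ext_antisym_entry[OF that, of M] arg_cong[OF assms, of "\<lambda>X. X $ j $ i"] by simp
  then show ?thesis by (simp add: lower_tri_def)
qed

lemma lower_tri_if_symmetric_chol_ext_deriv:
  assumes "transpose (chol_ext_deriv L X) = chol_ext_deriv L X"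
  shows "lower_tri X"
proof -
  have "X $ i $ j = 0" if "i < j" for i j
    using chol_ext_deriv_antisym_entry[OF that, of L X] arg_cong[OF assms, of "\<lambda>Y. Y $ j $ i"] by simp
  then show ?thesis by (simp add: lower_tri_def)
qed

lemma symmetric_in_chol_ext_image_iff:
  assumes "transpose A = A"
  shows "A \<in> chol_ext ` pos_diag \<longleftrightarrow> (\<exists>L. is_chol_factor L A)"
proof
  assume "A \<in> chol_ext ` pos_diag"
  then obtain M where M: "M \<in> pos_diag" "A = chol_ext M" by blast
  then have "lower_tri M" using assms by (intro lower_tri_if_symmetric_chol_ext) simp
  then show "\<exists>L. is_chol_factor L A"
    using M by (auto simp: is_chol_factor_def pos_diag_def chol_ext_lower_tri)
next
  assume "\<exists>L. is_chol_factor L A"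
  then obtain L where "is_chol_factor L A" by blast
  then have "L \<in> pos_diag" "chol_ext L = A"
    by (auto simp: is_chol_factor_def pos_diag_def chol_ext_lower_tri)
  then show "A \<in> chol_ext ` pos_diag" by blast
qed

lemma inj_on_chol_ext: "inj_on chol_ext pos_diag"
proof
  fix M1 M2 :: "real^('n::{finite,linorder})^('n::{finite,linorder})"
  assume M1: "M1 \<in> pos_diag" and M2: "M2 \<in> pos_diag" and eq: "chol_ext M1 = chol_ext M2"
  have "M1 $ i $ j = M2 $ i $ j" if "i < j" for i j
    using chol_ext_antisym_entry[OF that, of M1] chol_ext_antisym_entry[OF that, of M2] eq by simp
  then have upper: "triu_strict M1 = triu_strict M2" by (simp add: vec_eq_iff)
  then have "tril M1 ** transpose (tril M1) = tril M2 ** transpose (tril M2)"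
    using eq by (simp add: chol_ext_def)
  then have "tril M1 = tril M2"
    using M1 M2 lower_tri_factor_unique[OF lower_tri_tril _ lower_tri_tril, of M1 M2]
    by (auto simp: pos_diag_def)
  then show "M1 = M2" using upper tril_add_triu_strict[of M1] tril_add_triu_strict[of M2] by metis
qed

lemma open_pos_diag: "open pos_diag"
proof -
  have "pos_diag = (\<Inter>i. {M. 0 < M $ i $ i})" by (auto simp: pos_diag_def)
  also have "open \<dots>" by (intro open_INT ballI open_Collect_less continuous_intros) simp
  finally show ?thesis .
qed

lemma open_chol_ext_image: "open (chol_ext ` pos_diag)"
  by (rule invariance_of_domain[OF continuous_on_chol_ext open_pos_diag inj_on_chol_ext])

lemma norm_squared_eq_trace:
  "(norm (L :: real^('n::finite)^('m::finite)))\<^sup>2 = (\<Sum>i\<in>UNIV. (L ** transpose L) $ i $ i)"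
  by (simp add: power2_norm_eq_inner inner_vec_def matrix_mult_entry)

lemma norm_le_sqrt_of_gram_diag_le:
  fixes L :: "real^('n::finite)^('m::finite)"
  assumes "\<And>i. (L ** transpose L) $ i $ i \<le> c"
  shows "norm L \<le> sqrt (real CARD('m) * c)"
proof (rule real_le_rsqrt)
  show "(norm L)\<^sup>2 \<le> real CARD('m) * c"
    using sum_bounded_above[of UNIV "\<lambda>i. (L ** transpose L) $ i $ i" c] assms
    by (simp add: norm_squared_eq_trace)
qed

lemma lower_tri_factor_diag_pos:
  fixes L :: "real^('n::{finite,linorder})^('n::{finite,linorder})"
  assumes L: "lower_tri L" and nonneg: "\<forall>i. 0 \<le> L $ i $ i"
    and pd: "\<forall>v. v \<noteq> 0 \<longrightarrow> 0 < v \<bullet> ((L ** transpose L) *v v)"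
  shows "\<forall>i. 0 < L $ i $ i"
proof -
  have "\<forall>v. (L ** transpose L) *v v = 0 \<longrightarrow> v = 0"
    using pd by (metis inner_zero_right less_irrefl)
  then have "det (L ** transpose L) \<noteq> 0"
    using det_nz_iff_inj[of "(*v) (L ** transpose L)"] by (simp add: linear_inj_iff_eq_0)
  then have "L $ i $ i \<noteq> 0" for i
    by (simp add: det_mul det_lower_tri[OF L])
  then show ?thesis using nonneg by (simp add: order.strict_iff_order)
qed

lemma closed_lower_tri_nonneg_diag:
  "closed {L. lower_tri (L :: real^('n::{finite,linorder})^('n::{finite,linorder})) \<and> (\<forall>i. 0 \<le> L $ i $ i)}"
proof -
  have "closed {L. i < j \<longrightarrow> L $ i $ j = (0::real)}" for i j :: 'n
    by (cases "i < j") (simp_all add: closed_Collect_eq continuous_on_component)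
  then have "closed {L. \<forall>i j :: 'n. i < j \<longrightarrow> L $ i $ j = (0::real)}"
    by (intro closed_Collect_all)
  moreover have "closed {L. \<forall>i :: 'n. (0::real) \<le> L $ i $ i}"
    by (intro closed_Collect_all closed_Collect_le continuous_intros)
  ultimately show ?thesis
    unfolding lower_tri_def Collect_conj_eq by (rule closed_Int)
qed

lemma closed_lower_tri_gram_matrices:
  "closed ((\<lambda>L. L ** transpose L) ` {L. lower_tri (L :: real^('n::{finite,linorder})^('n::{finite,linorder})) \<and> (\<forall>i. 0 \<le> L $ i $ i)})"
proof -
  define C :: "(real^('n::{finite,linorder})^('n::{finite,linorder})) set" where "C = {L. lower_tri L \<and> (\<forall>i. 0 \<le> L $ i $ i)}"
  have "closed ((\<lambda>L. L ** transpose L) ` C)"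
    unfolding closed_sequential_limits
  proof (intro allI impI, elim conjE)
    fix A :: "nat \<Rightarrow> real^('n::{finite,linorder})^('n::{finite,linorder})" and A0
    assume "\<forall>n. A n \<in> (\<lambda>L. L ** transpose L) ` C"
    then have "\<forall>n. \<exists>L. L \<in> C \<and> A n = L ** transpose L" by blast
    then obtain L where L: "\<And>n. L n \<in> C" "\<And>n. A n = L n ** transpose (L n)" by metis
    assume lim: "A \<longlonglongrightarrow> A0"
    then obtain B where B: "\<And>n. norm (A n) \<le> B"
      using convergent_imp_bounded[OF lim] by (auto simp: bounded_iff)
    have "norm (L n) \<le> sqrt (real CARD('n) * B)" for n
    proof (rule norm_le_sqrt_of_gram_diag_le)
      show "(L n ** transpose (L n)) $ i $ i \<le> B" for i
        unfolding L(2)[symmetric]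
        using component_le_norm_cart[of "A n $ i" i] Finite_Cartesian_Product.norm_nth_le[of "A n" i] B[of n]
        by linarith
    qed
    then have "bounded (range L)"
      by (auto simp: bounded_iff)
    then obtain M r where r: "strict_mono r" and LM: "(L \<circ> r) \<longlonglongrightarrow> M"
      using bounded_imp_convergent_subsequence by blast
    have "\<forall>n. (L \<circ> r) n \<in> C" using L(1) by simp
    then have "M \<in> C"
      using closed_lower_tri_nonneg_diag LM unfolding C_def closed_sequential_limits by blast
    have "(\<lambda>n. (L \<circ> r) n ** transpose ((L \<circ> r) n)) \<longlonglongrightarrow> M ** transpose M"
      by (intro bounded_bilinear.tendsto[OF bounded_bilinear_matrix_mult] LM
          bounded_linear.tendsto[OF bounded_linear_transpose])
    moreover have "(\<lambda>n. (L \<circ> r) n ** transpose ((L \<circ> r) n)) = A \<circ> r"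
      by (simp add: fun_eq_iff L(2))
    ultimately have "A0 = M ** transpose M"
      using LIMSEQ_subseq_LIMSEQ[OF lim r] LIMSEQ_unique by metis
    then show "A0 \<in> (\<lambda>L. L ** transpose L) ` C"
      using \<open>M \<in> C\<close> by blast
  qed
  then show ?thesis by (simp add: C_def)
qed

lemma convex_pos_def_matrices:
  "convex {A :: real^'n^'n. transpose A = A \<and> (\<forall>v. v \<noteq> 0 \<longrightarrow> 0 < v \<bullet> (A *v v))}"
proof (rule convexI, safe)
  fix A B :: "real^'n^'n" and u w :: real and v :: "real^'n"
  assume "transpose A = A" "transpose B = B"
  then show "transpose (u *\<^sub>R A + w *\<^sub>R B) = u *\<^sub>R A + w *\<^sub>R B"
    by (simp add: vec_eq_iff)
  assume A: "\<forall>v. v \<noteq> 0 \<longrightarrow> 0 < v \<bullet> (A *v v)" and B: "\<forall>v. v \<noteq> 0 \<longrightarrow> 0 < v \<bullet> (B *v v)"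
    and "0 \<le> u" "0 \<le> w" "u + w = 1" "v \<noteq> 0"
  then have "0 < u * (v \<bullet> (A *v v)) + w * (v \<bullet> (B *v v))"
    by (cases "u = 0") (auto intro!: add_pos_nonneg)
  then show "0 < v \<bullet> ((u *\<^sub>R A + w *\<^sub>R B) *v v)"
    by (simp add: matrix_vector_mult_add_rdistrib scaleR_matrix_vector_assoc[symmetric] inner_add_right)
qed

lemma chol_exists:
  fixes A :: "real^('n::{finite,linorder})^('n::{finite,linorder})"
  assumes "transpose A = A" and "\<forall>v. v \<noteq> 0 \<longrightarrow> 0 < v \<bullet> (A *v v)"
  shows "\<exists>L. is_chol_factor L A"
proof -
  txt \<open>
    Within the connected set P of positive definite matrices, those with a Cholesky factor form a
    set that is open (invariance of domain) and closed (bounded factors have convergent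
    subsequences), and it contains the identity.
  \<close>
  define P :: "(real^('n::{finite,linorder})^('n::{finite,linorder})) set"
    where "P = {A. transpose A = A \<and> (\<forall>v. v \<noteq> 0 \<longrightarrow> 0 < v \<bullet> (A *v v))}"
  define F :: "(real^('n::{finite,linorder})^('n::{finite,linorder})) set" where "F = {A. \<exists>L. is_chol_factor L A}"
  define G :: "(real^('n::{finite,linorder})^('n::{finite,linorder})) set"
    where "G = (\<lambda>L. L ** transpose L) ` {L. lower_tri L \<and> (\<forall>i. 0 \<le> L $ i $ i)}"
  have "B \<in> F \<longleftrightarrow> B \<in> chol_ext ` pos_diag" if "B \<in> P" for B
    using that symmetric_in_chol_ext_image_iff[of B] by (simp add: P_def F_def)
  then have "P \<inter> F = P \<inter> chol_ext ` pos_diag" by blast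
  then have "openin (top_of_set P) (P \<inter> F)"
    by (simp add: openin_open_Int open_chol_ext_image)
  have "B \<in> F \<longleftrightarrow> B \<in> G" if "B \<in> P" for B
  proof
    assume "B \<in> F"
    then show "B \<in> G" by (force simp: F_def G_def is_chol_factor_def less_imp_le)
  next
    assume "B \<in> G"
    then obtain L where L: "lower_tri L" "\<forall>i. 0 \<le> L $ i $ i" "B = L ** transpose L"
      by (auto simp: G_def)
    then have "\<forall>i. 0 < L $ i $ i"
      using that lower_tri_factor_diag_pos[OF L(1,2)] by (simp add: P_def)
    then show "B \<in> F" using L by (auto simp: F_def is_chol_factor_def)
  qed
  then have "P \<inter> F = P \<inter> G" by blast
  then have "closedin (top_of_set P) (P \<inter> F)"
    by (simp add: G_def closedin_closed_Int closed_lower_tri_gram_matrices)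
  moreover have "mat 1 \<in> P \<inter> F"
  proof -
    have "is_chol_factor (mat 1) (mat 1 :: real^('n::{finite,linorder})^('n::{finite,linorder}))"
      by (simp add: is_chol_factor_def) (simp add: lower_tri_def mat_def)
    then show ?thesis by (auto simp: P_def F_def)
  qed
  moreover have "connected P"
    unfolding P_def by (rule convex_connected[OF convex_pos_def_matrices])
  ultimately have "P \<inter> F = P"
    using \<open>openin (top_of_set P) (P \<inter> F)\<close> unfolding connected_clopen by blast
  moreover have "A \<in> P" using assms by (simp add: P_def)
  ultimately show ?thesis by (auto simp: F_def)
qed

text \<open>On matrices, norm is the Frobenius norm.\<close>

lemma norm_matrix_vector_mult_le: "norm ((A :: real^('n::finite)^('m::finite)) *v x) \<le> norm A * norm x"
proof -
  have "norm (A *v x) \<le> norm (\<chi> i. norm (A $ i) * norm x)"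
  proof (rule norm_le_componentwise_cart)
    show "norm ((A *v x) $ i) \<le> norm ((\<chi> i. norm (A $ i) * norm x) $ i)" for i
      using Cauchy_Schwarz_ineq2[of "A $ i" x] by (simp add: matrix_vector_mul_component)
  qed
  also have "norm (\<chi> i. norm (A $ i) * norm x) = norm (\<chi> i. norm (A $ i)) * norm x"
  proof -
    have "(\<chi> i. norm (A $ i) * norm x) = norm x *\<^sub>R (\<chi> i. norm (A $ i))"
      by (simp add: vec_eq_iff)
    then show ?thesis by (simp only: norm_scaleR abs_norm_cancel mult.commute)
  qed
  also have "norm (\<chi> i. norm (A $ i)) = norm A"
    by (simp add: norm_vec_def)
  finally show ?thesis by (simp add: mult.commute)
qed

lemma norm_transpose: "norm (transpose (A :: real^('n::finite)^('m::finite))) = norm A"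
proof -
  have "(norm (transpose A))\<^sup>2 = (norm A)\<^sup>2"
    unfolding power2_norm_eq_inner inner_vec_def by simp (rule sum.swap)
  then show ?thesis by (simp add: power2_eq_iff_nonneg)
qed

lemma norm_matrix_mult_le:
  "norm ((A :: real^('n::finite)^('m::finite)) ** (B :: real^('p::finite)^'n)) \<le> norm A * norm B"
proof -
  have row: "(A ** B) $ i = transpose B *v (A $ i)" for i
    by (simp add: vec_eq_iff matrix_mult_entry matrix_vector_mult_def mult.commute)
  have "norm (A ** B) \<le> norm (\<chi> i. norm B * norm (A $ i))"
  proof (rule norm_le_componentwise_cart)
    show "norm ((A ** B) $ i) \<le> norm ((\<chi> i. norm B * norm (A $ i)) $ i)" for i
      using norm_matrix_vector_mult_le[of "transpose B" "A $ i"] by (simp add: row norm_transpose)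
  qed
  also have "norm (\<chi> i. norm B * norm (A $ i)) = norm B * norm (\<chi> i. norm (A $ i))"
  proof -
    have "(\<chi> i. norm B * norm (A $ i)) = norm B *\<^sub>R (\<chi> i. norm (A $ i))"
      by (simp add: vec_eq_iff)
    then show ?thesis by (simp only: norm_scaleR abs_norm_cancel)
  qed
  also have "norm (\<chi> i. norm (A $ i)) = norm A"
    by (simp add: norm_vec_def)
  finally show ?thesis by (simp add: mult.commute)
qed

lemma norm_le_norm_add_transpose_lower_tri:
  fixes Y :: "real^('n::{finite,linorder})^('n::{finite,linorder})"
  assumes "lower_tri Y"
  shows "norm Y \<le> norm (Y + transpose Y)"
proof (rule norm_le_componentwise_cart)
  fix i
  show "norm (Y $ i) \<le> norm ((Y + transpose Y) $ i)"
  proof (rule norm_le_componentwise_cart)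
    fix j
    show "norm (Y $ i $ j) \<le> norm ((Y + transpose Y) $ i $ j)"
      using assms by (cases i j rule: linorder_cases) (simp_all add: lower_tri_def)
  qed
qed

lemma diag_eq_inner_axis: "(A :: real^('n::finite)^'n) $ i $ i = axis i 1 \<bullet> (A *v axis i 1)"
  by (simp add: inner_axis' matrix_vector_mult_basis column_def)

lemma quadratic_form_bounds_le:
  fixes A :: "real^('n::finite)^'n"
  assumes "\<forall>v. \<mu> * (v \<bullet> v) \<le> v \<bullet> (A *v v)" and "\<forall>v. v \<bullet> (A *v v) \<le> \<nu> * (v \<bullet> v)"
  shows "\<mu> \<le> \<nu>"
  using assms[THEN spec[of _ "axis undefined 1"]] by (simp add: inner_axis_axis)

lemma norm_factor_le:
  fixes L A :: "real^('n::finite)^'n"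
  assumes "L ** transpose L = A" and "\<forall>v. v \<bullet> (A *v v) \<le> \<nu> * (v \<bullet> v)"
  shows "norm L \<le> sqrt (real CARD('n) * \<nu>)"
proof (rule norm_le_sqrt_of_gram_diag_le)
  fix i
  have "A $ i $ i \<le> \<nu> * (axis i 1 \<bullet> axis i (1::real))"
    using spec[OF assms(2), of "axis i 1"] diag_eq_inner_axis[of A i] by simp
  then show "(L ** transpose L) $ i $ i \<le> \<nu>"
    by (simp add: inner_axis_axis assms(1))
qed

lemma norm_inverse_factor_le:
  fixes L N A :: "real^('n::finite)^'n"
  assumes LA: "L ** transpose L = A" and NL: "N ** L = mat 1"
    and "0 < \<mu>" and pd: "\<forall>v. \<mu> * (v \<bullet> v) \<le> v \<bullet> (A *v v)"
  shows "norm N * norm N \<le> real CARD('n) / \<mu>"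
proof -
  have tLN: "transpose L ** transpose N = mat 1"
    using NL by (metis matrix_transpose_mul transpose_mat)
  have row: "(norm (N $ i))\<^sup>2 \<le> 1 / \<mu>" for i
  proof -
    define u where "u = transpose N *v axis i 1"
    have Ni: "N $ i = u"
      by (simp add: u_def vec_eq_iff matrix_vector_mult_basis column_def)
    have Lu: "transpose L *v u = axis i 1"
      unfolding u_def by (simp only: matrix_vector_mul_assoc tLN matrix_vector_mul_lid)
    have "u \<bullet> (A *v u) = (transpose L *v u) \<bullet> (transpose L *v u)"
      unfolding LA[symmetric] matrix_vector_mul_assoc[symmetric]
      by (metis dot_lmul_matrix transpose_transpose vector_transpose_matrix)
    also have "\<dots> = 1" by (simp only: Lu inner_axis_axis) simp
    finally have "\<mu> * (u \<bullet> u) \<le> 1" using pd by metis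
    then show ?thesis using \<open>0 < \<mu>\<close> Ni by (simp add: power2_norm_eq_inner field_simps)
  qed
  have "(norm N)\<^sup>2 = (\<Sum>i\<in>UNIV. (norm (N $ i))\<^sup>2)"
    by (simp add: norm_vec_def L2_set_def sum_nonneg)
  also have "\<dots> \<le> real CARD('n) * (1 / \<mu>)"
    using sum_bounded_above[of UNIV "\<lambda>i. (norm (N $ i))\<^sup>2" "1 / \<mu>"] row by simp
  finally show ?thesis by (simp add: power2_eq_square)
qed

lemma norm_chol_ext_deriv_solution_le:
  fixes L N X E :: "real^('n::{finite,linorder})^('n::{finite,linorder})"
  assumes L: "lower_tri L" "\<forall>i. L $ i $ i \<noteq> 0" and LN: "L ** N = mat 1"
    and symE: "transpose E = E" and eq: "chol_ext_deriv L X = E"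
  shows "norm X \<le> norm L * (norm N * norm N) * norm E"
proof -
  have X: "lower_tri X"
    using symE eq lower_tri_if_symmetric_chol_ext_deriv by blast
  have E: "E = X ** transpose L + L ** transpose X"
    using eq by (simp add: chol_ext_deriv_def tril_lower_tri[OF X] tril_lower_tri[OF L(1)]
        triu_strict_lower_tri[OF X])
  have NL: "N ** L = mat 1" using LN matrix_left_right_inverse by blast
  have tLN: "transpose L ** transpose N = mat 1"
    using NL by (metis matrix_transpose_mul transpose_mat)
  define Y where "Y = N ** X"
  have Y: "lower_tri Y"
    unfolding Y_def by (rule lower_tri_mult[OF lower_tri_right_inverse[OF L LN] X])
  have "N ** E ** transpose N = N ** (X ** transpose L) ** transpose N + N ** (L ** transpose X) ** transpose N"
    by (simp add: E matrix_add_ldistrib vec_eq_iff matrix_mult_entry sum.distrib distrib_right)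
  also have "N ** (X ** transpose L) ** transpose N = Y ** (transpose L ** transpose N)"
    by (simp add: Y_def matrix_mul_assoc)
  also have "N ** (L ** transpose X) ** transpose N = (N ** L) ** (transpose X ** transpose N)"
    by (simp add: matrix_mul_assoc)
  finally have "Y + transpose Y = N ** E ** transpose N"
    by (simp add: tLN NL Y_def matrix_transpose_mul)
  then have "norm Y \<le> norm N * norm E * norm N"
    using norm_le_norm_add_transpose_lower_tri[OF Y] norm_matrix_mult_le[of "N ** E" "transpose N"]
      norm_matrix_mult_le[of N E] norm_transpose[of N]
    by (smt (verit, best) mult_right_mono norm_ge_zero)
  moreover have "norm X \<le> norm L * norm Y"
    using norm_matrix_mult_le[of L Y] by (simp add: Y_def matrix_mul_assoc LN)
  ultimately show ?thesis
    by (smt (verit) mult.assoc mult.commute mult_left_mono norm_ge_zero)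
qed

lemma chol_ext_deriv_inverse:
  fixes L A :: "real^('n::{finite,linorder})^('n::{finite,linorder})"
  assumes L: "is_chol_factor L A" and "0 < \<mu>"
    and lower: "\<forall>v. \<mu> * (v \<bullet> v) \<le> v \<bullet> (A *v v)" and upper: "\<forall>v. v \<bullet> (A *v v) \<le> \<nu> * (v \<bullet> v)"
  obtains g' where "\<And>E. chol_ext_deriv L (g' E) = E"
    and "\<And>E. transpose E = E \<Longrightarrow> norm (g' E) \<le> sqrt (real CARD('n) * \<nu>) * (real CARD('n) / \<mu>) * norm E"
proof -
  have Ldiag: "\<forall>i. L $ i $ i \<noteq> 0" and LA: "L ** transpose L = A"
    using L by (auto simp: is_chol_factor_def less_imp_neq[symmetric])
  obtain N where LN: "L ** N = mat 1" and NL: "N ** L = mat 1"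
    using invertible_lower_tri[OF _ Ldiag] L by (auto simp: is_chol_factor_def invertible_def)
  have nN: "norm N * norm N \<le> real CARD('n) / \<mu>"
    by (rule norm_inverse_factor_le[OF LA NL \<open>0 < \<mu>\<close> lower])
  have nL: "norm L \<le> sqrt (real CARD('n) * \<nu>)"
    by (rule norm_factor_le[OF LA upper])
  have "0 \<le> \<nu>"
    using quadratic_form_bounds_le[OF lower upper] \<open>0 < \<mu>\<close> by linarith
  have bound: "norm X \<le> sqrt (real CARD('n) * \<nu>) * (real CARD('n) / \<mu>) * norm E"
    if "transpose E = E" "chol_ext_deriv L X = E" for X E
  proof -
    have "norm X \<le> norm L * (norm N * norm N) * norm E"
      using norm_chol_ext_deriv_solution_le[OF _ Ldiag LN that] L by (simp add: is_chol_factor_def)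
    also have "\<dots> \<le> sqrt (real CARD('n) * \<nu>) * (real CARD('n) / \<mu>) * norm E"
      using \<open>0 \<le> \<nu>\<close> by (intro mult_right_mono mult_mono nL nN) auto
    finally show ?thesis .
  qed
  have "linear (chol_ext_deriv L)"
    using has_derivative_linear[OF has_derivative_chol_ext] .
  moreover have "inj (chol_ext_deriv L)"
  proof -
    have "X = 0" if "chol_ext_deriv L X = 0" for X
      using bound[OF _ that] by simp
    then show ?thesis using \<open>linear (chol_ext_deriv L)\<close> by (simp add: linear_inj_iff_eq_0)
  qed
  ultimately obtain g' where g': "\<And>E. chol_ext_deriv L (g' E) = E"
    using linear_injective_isomorphism by blast
  show ?thesis
    by (rule that[OF g']) (use bound g' in blast)
qed

lemma inv_into_chol_ext_eq_chol:
  assumes "transpose A = A" and "A \<in> chol_ext ` pos_diag"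
  shows "inv_into pos_diag chol_ext A = chol A"
proof -
  obtain L where L: "is_chol_factor L A"
    using assms symmetric_in_chol_ext_image_iff by blast
  then have "L \<in> pos_diag" "chol_ext L = A"
    by (auto simp: is_chol_factor_def pos_diag_def chol_ext_lower_tri)
  then have "inv_into pos_diag chol_ext A = L"
    using inj_on_chol_ext by (metis inv_into_f_f)
  also have "\<dots> = chol A"
    using chol_eqI[OF L] by simp
  finally show ?thesis .
qed

lemma has_derivative_inv_into_chol_ext:
  assumes L: "is_chol_factor L A" and g': "\<And>E. chol_ext_deriv L (g' E) = E"
  shows "(inv_into pos_diag chol_ext has_derivative g') (at A)"
proof -
  have L_pos: "L \<in> pos_diag" and L_image: "chol_ext L = A"
    using L by (auto simp: is_chol_factor_def pos_diag_def chol_ext_lower_tri)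
  have "chol_ext_deriv L \<circ> g' = id" by (simp add: fun_eq_iff g')
  from has_derivative_inverse_strong[OF open_pos_diag L_pos continuous_on_chol_ext
      inv_into_f_f[OF inj_on_chol_ext] has_derivative_chol_ext this]
  show ?thesis by (simp only: L_image)
qed

lemma inv_into_chol_ext_eq_chol_near:
  assumes "isCont M z" and sym: "\<And>z. transpose (M z) = M z" and "M z \<in> chol_ext ` pos_diag"
  obtains d where "0 < d" and "\<And>z'. dist z' z < d \<Longrightarrow> inv_into pos_diag chol_ext (M z') = chol (M z')"
proof -
  obtain e where "0 < e" and e: "ball (M z) e \<subseteq> chol_ext ` pos_diag"
    using openE[OF open_chol_ext_image assms(3)] by blast
  obtain d where "0 < d" and d: "\<And>z'. dist z' z < d \<Longrightarrow> dist (M z') (M z) < e"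
    using assms(1) \<open>0 < e\<close> unfolding continuous_at_eps_delta by blast
  show ?thesis
  proof (rule that[OF \<open>0 < d\<close>])
    fix z' assume "dist z' z < d"
    then have "dist (M z) (M z') < e"
      using d dist_commute[of "M z" "M z'"] by simp
    then have "M z' \<in> chol_ext ` pos_diag"
      using e by auto
    then show "inv_into pos_diag chol_ext (M z') = chol (M z')"
      by (rule inv_into_chol_ext_eq_chol[OF sym])
  qed
qed

lemma has_derivative_chol:
  fixes M :: "'a::euclidean_space \<Rightarrow> real^('n::{finite,linorder})^('n::{finite,linorder})"
  assumes M: "(M has_derivative DM) (at z)" and sym: "\<And>z. transpose (M z) = M z"
    and "0 < \<mu>" and lower: "\<forall>v. \<mu> * (v \<bullet> v) \<le> v \<bullet> (M z *v v)"
    and upper: "\<forall>v. v \<bullet> (M z *v v) \<le> \<nu> * (v \<bullet> v)"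
  obtains D where "((\<lambda>z. chol (M z)) has_derivative D) (at z)"
    and "\<And>u. norm (D u) \<le> sqrt (real CARD('n) * \<nu>) * (real CARD('n) / \<mu>) * norm (DM u)"
proof -
  have "0 < v \<bullet> (M z *v v)" if "v \<noteq> 0" for v
  proof -
    have "0 < \<mu> * (v \<bullet> v)" using that \<open>0 < \<mu>\<close> by simp
    then show ?thesis using lower by (meson less_le_trans)
  qed
  then obtain L where L: "is_chol_factor L (M z)"
    using chol_exists sym by blast
  obtain g' where g': "\<And>E. chol_ext_deriv L (g' E) = E"
    and g'_bound: "\<And>E. transpose E = E \<Longrightarrow>
      norm (g' E) \<le> sqrt (real CARD('n) * \<nu>) * (real CARD('n) / \<mu>) * norm E"
    using chol_ext_deriv_inverse[OF L \<open>0 < \<mu>\<close> lower upper] by blast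
  from diff_chain_at[OF M has_derivative_inv_into_chol_ext[OF L g']]
  have inv: "((\<lambda>z. inv_into pos_diag chol_ext (M z)) has_derivative (\<lambda>u. g' (DM u))) (at z)"
    by (simp add: o_def)
  have "M z \<in> chol_ext ` pos_diag"
    using L symmetric_in_chol_ext_image_iff sym by blast
  then obtain d where "0 < d"
    and d: "\<And>z'. dist z' z < d \<Longrightarrow> inv_into pos_diag chol_ext (M z') = chol (M z')"
    using inv_into_chol_ext_eq_chol_near[OF has_derivative_continuous[OF M] sym] by blast
  have "((\<lambda>z. chol (M z)) has_derivative (\<lambda>u. g' (DM u))) (at z)"
    by (rule has_derivative_transform_within[OF inv \<open>0 < d\<close>]) (simp_all add: d)
  moreover have "transpose (DM u) = DM u" for u
  proof -
    have "(M has_derivative (\<lambda>u. transpose (DM u))) (at z)"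
      using bounded_linear.has_derivative[OF bounded_linear_transpose M] sym by simp
    from has_derivative_unique[OF this M] show ?thesis by (simp add: fun_eq_iff)
  qed
  ultimately show ?thesis using that g'_bound by blast
qed

section \<open>Derivatives of the unscented transform\<close>

lemma sigma_pt_shift: "sigma_pt \<kappa> x S i = x + sigma_pt \<kappa> 0 S i"
  by (simp add: sigma_pt_def Let_def)

lemma sigma_pt_eq_column:
  "\<exists>s j. \<bar>s\<bar> \<le> 1 \<and> (\<forall>(x :: real^('n::{finite,linorder})) S. sigma_pt \<kappa> x S i =
      x + s *\<^sub>R column j (chol ((real CARD('n) + \<kappa>) *\<^sub>R S)))"
proof (cases "i = 0")
  case True
  then show ?thesis by (intro exI[of _ 0]) (simp add: sigma_pt_def)
next
  case False
  show ?thesis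
  proof (cases "i \<le> CARD('n)")
    case True
    then show ?thesis using \<open>i \<noteq> 0\<close>
      by (intro exI[of _ 1] exI[of _ "idx (i - 1) :: 'n"]) (simp add: sigma_pt_def Let_def)
  next
    case False
    then show ?thesis using \<open>i \<noteq> 0\<close>
      by (intro exI[of _ "-1"] exI[of _ "idx (i - CARD('n) - 1) :: 'n"]) (simp add: sigma_pt_def Let_def)
  qed
qed

lemma has_derivative_comp_sigma_pt:
  assumes "\<forall>z. (f has_derivative f' z) (at z)"
  shows "((\<lambda>z. f (sigma_pt \<kappa> z S i)) has_derivative f' (sigma_pt \<kappa> x S i)) (at x)"
proof -
  have "((\<lambda>z. z + sigma_pt \<kappa> 0 S i) has_derivative (\<lambda>u. u)) (at x)"
    using has_derivative_add[OF has_derivative_ident has_derivative_const] by simp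
  from diff_chain_at[OF this, of f] show ?thesis
    using assms by (simp add: o_def sigma_pt_shift[symmetric])
qed

lemma norm_derivative_le_onorm:
  assumes "(f has_derivative f') F" and "onorm f' \<le> b"
  shows "norm (f' u) \<le> b * norm u"
  using onorm[OF has_derivative_bounded_linear[OF assms(1)], of u] assms(2)
  by (meson mult_right_mono norm_ge_zero order_trans)

text \<open>\<kappa> may be negative, so the sigma weights need not form a convex combination.\<close>

definition sigma_wt_abs_sum :: "real \<Rightarrow> nat \<Rightarrow> real" where
  "sigma_wt_abs_sum \<kappa> n = (\<Sum>i\<le>2 * n. \<bar>sigma_wt n \<kappa> i\<bar>)"

lemma sigma_wt_abs_sum_nonneg: "0 \<le> sigma_wt_abs_sum \<kappa> n"
  by (simp add: sigma_wt_abs_sum_def sum_nonneg)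

lemma norm_sigma_wt_sum_le:
  fixes F :: "nat \<Rightarrow> 'a::real_normed_vector"
  assumes "\<And>i. i \<le> 2 * n \<Longrightarrow> norm (F i) \<le> B"
  shows "norm (\<Sum>i\<le>2 * n. sigma_wt n \<kappa> i *\<^sub>R F i) \<le> sigma_wt_abs_sum \<kappa> n * B"
proof -
  have "norm (\<Sum>i\<le>2 * n. sigma_wt n \<kappa> i *\<^sub>R F i) \<le> (\<Sum>i\<le>2 * n. \<bar>sigma_wt n \<kappa> i\<bar> * B)"
    using assms by (intro order_trans[OF norm_sum] sum_mono) (simp add: mult_left_mono)
  then show ?thesis by (simp add: sigma_wt_abs_sum_def sum_distrib_right)
qed

lemma norm_ut_mean_le:
  fixes x :: "real^('n::{finite,linorder})"
  assumes "\<forall>z. norm (f z) \<le> \<delta>"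
  shows "norm (ut_mean \<kappa> f x S) \<le> sigma_wt_abs_sum \<kappa> CARD('n) * \<delta>"
  unfolding ut_mean_def using assms by (intro norm_sigma_wt_sum_le) blast

lemma has_derivative_ut_mean:
  fixes f :: "real^('n::{finite,linorder}) \<Rightarrow> real^('m::finite)"
  assumes f_deriv: "\<forall>z. (f has_derivative f' z) (at z)"
    and f'_bound: "\<forall>i. i \<le> 2 * CARD('n) \<longrightarrow> onorm (f' (sigma_pt \<kappa> x S i)) \<le> b"
  obtains D where "((\<lambda>z. ut_mean \<kappa> f z S) has_derivative D) (at x)"
    and "\<And>u. norm (D u) \<le> sigma_wt_abs_sum \<kappa> CARD('n) * b * norm u"
proof
  show "((\<lambda>z. ut_mean \<kappa> f z S) has_derivative
      (\<lambda>u. \<Sum>i\<le>2 * CARD('n). sigma_wt CARD('n) \<kappa> i *\<^sub>R f' (sigma_pt \<kappa> x S i) u)) (at x)"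
    unfolding ut_mean_def
    by (intro has_derivative_sum has_derivative_scaleR_right has_derivative_comp_sigma_pt[OF f_deriv])
  show "norm (\<Sum>i\<le>2 * CARD('n). sigma_wt CARD('n) \<kappa> i *\<^sub>R f' (sigma_pt \<kappa> x S i) u)
      \<le> sigma_wt_abs_sum \<kappa> CARD('n) * b * norm u" for u
  proof -
    have "norm (f' (sigma_pt \<kappa> x S i) u) \<le> b * norm u" if "i \<le> 2 * CARD('n)" for i
      using norm_derivative_le_onorm[OF spec[OF f_deriv]] f'_bound that by blast
    then show ?thesis
      using norm_sigma_wt_sum_le[of "CARD('n)" "\<lambda>i. f' (sigma_pt \<kappa> x S i) u" "b * norm u" \<kappa>]
      by (simp add: mult.assoc)
  qed
qed

lemma bounded_bilinear_outer:
  "bounded_bilinear (outer :: real^('a::finite) \<Rightarrow> real^('b::finite) \<Rightarrow> real^'b^'a)"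
proof -
  have "bilinear (outer :: real^'a \<Rightarrow> real^'b \<Rightarrow> real^'b^'a)"
    unfolding bilinear_def
  proof (intro allI conjI)
    fix a :: "real^'a" and b :: "real^'b"
    show "linear (outer a)" by (rule linearI) (simp_all add: vec_eq_iff outer_def algebra_simps)
    show "linear (\<lambda>a. outer a b)" by (rule linearI) (simp_all add: vec_eq_iff outer_def algebra_simps)
  qed
  then show ?thesis by (simp add: bilinear_conv_bounded_bilinear)
qed

lemma norm_outer_le: "norm (outer (a :: real^('a::finite)) (b :: real^('b::finite))) \<le> norm a * norm b"
proof -
  have "norm (outer a b) \<le> norm (norm b *\<^sub>R a)"
  proof (rule norm_le_componentwise_cart)
    fix i
    have "outer a b $ i = a $ i *\<^sub>R b" by (simp add: outer_def vec_eq_iff)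
    then show "norm (outer a b $ i) \<le> norm ((norm b *\<^sub>R a) $ i)" by (simp add: abs_mult)
  qed
  then show ?thesis by (simp add: mult.commute)
qed

lemma ut_cov_symmetric: "transpose (ut_cov \<kappa> f x S) = ut_cov \<kappa> f x S"
  by (simp add: vec_eq_iff ut_cov_def outer_def sum_component mult.commute)

lemma norm_outer_add_outer_le:
  "norm (outer a b + outer b a) \<le> 2 * (norm (a :: real^('a::finite)) * norm b)"
proof -
  have "norm (outer b a) \<le> norm a * norm b"
    using norm_outer_le[of b a] by (simp add: mult.commute)
  then show ?thesis
    using norm_triangle_ineq[of "outer a b" "outer b a"] norm_outer_le[of a b] by linarith
qed

lemma has_derivative_ut_second_moment:
  fixes f :: "real^('n::{finite,linorder}) \<Rightarrow> real^('m::finite)"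
  assumes f_deriv: "\<forall>z. (f has_derivative f' z) (at z)"
    and f'_bound: "\<forall>i. i \<le> 2 * CARD('n) \<longrightarrow> onorm (f' (sigma_pt \<kappa> x S i)) \<le> b"
    and f_bound: "\<forall>z. norm (f z) \<le> \<delta>"
  obtains D where "((\<lambda>z. \<Sum>i\<le>2 * CARD('n). sigma_wt CARD('n) \<kappa> i *\<^sub>R
      outer (f (sigma_pt \<kappa> z S i)) (f (sigma_pt \<kappa> z S i))) has_derivative D) (at x)"
    and "\<And>u. norm (D u) \<le> sigma_wt_abs_sum \<kappa> CARD('n) * (2 * (\<delta> * (b * norm u)))"
proof
  define s where "s i = sigma_pt \<kappa> x S i" for i
  show "((\<lambda>z. \<Sum>i\<le>2 * CARD('n). sigma_wt CARD('n) \<kappa> i *\<^sub>R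
      outer (f (sigma_pt \<kappa> z S i)) (f (sigma_pt \<kappa> z S i))) has_derivative
      (\<lambda>u. \<Sum>i\<le>2 * CARD('n). sigma_wt CARD('n) \<kappa> i *\<^sub>R
        (outer (f (s i)) (f' (s i) u) + outer (f' (s i) u) (f (s i))))) (at x)"
    unfolding s_def
    by (intro has_derivative_sum has_derivative_scaleR_right
        bounded_bilinear.FDERIV[OF bounded_bilinear_outer] has_derivative_comp_sigma_pt[OF f_deriv])
  fix u
  have "0 \<le> \<delta>" using f_bound norm_ge_zero order_trans by blast
  show "norm (\<Sum>i\<le>2 * CARD('n). sigma_wt CARD('n) \<kappa> i *\<^sub>R
        (outer (f (s i)) (f' (s i) u) + outer (f' (s i) u) (f (s i))))
      \<le> sigma_wt_abs_sum \<kappa> CARD('n) * (2 * (\<delta> * (b * norm u)))"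
  proof (rule norm_sigma_wt_sum_le)
    fix i assume "i \<le> 2 * CARD('n)"
    then have "norm (f' (s i) u) \<le> b * norm u"
      using norm_derivative_le_onorm[OF spec[OF f_deriv]] f'_bound by (simp add: s_def)
    then have "norm (f (s i)) * norm (f' (s i) u) \<le> \<delta> * (b * norm u)"
      using f_bound \<open>0 \<le> \<delta>\<close> by (intro mult_mono) auto
    then show "norm (outer (f (s i)) (f' (s i) u) + outer (f' (s i) u) (f (s i)))
        \<le> 2 * (\<delta> * (b * norm u))"
      using norm_outer_add_outer_le[of "f (s i)" "f' (s i) u"] by linarith
  qed
qed

lemma has_derivative_ut_cov:
  fixes f :: "real^('n::{finite,linorder}) \<Rightarrow> real^('m::finite)"
  assumes f_deriv: "\<forall>z. (f has_derivative f' z) (at z)"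
    and f'_bound: "\<forall>i. i \<le> 2 * CARD('n) \<longrightarrow> onorm (f' (sigma_pt \<kappa> x S i)) \<le> b"
    and f_bound: "\<forall>z. norm (f z) \<le> \<delta>"
  obtains D where "((\<lambda>z. ut_cov \<kappa> f z S) has_derivative D) (at x)"
    and "\<And>u. norm (D u) \<le> 2 * sigma_wt_abs_sum \<kappa> CARD('n) * \<delta> * b * (1 + sigma_wt_abs_sum \<kappa> CARD('n)) * norm u"
proof -
  define W where "W = sigma_wt_abs_sum \<kappa> CARD('n)"
  define m where "m = ut_mean \<kappa> f x S"
  have "0 \<le> \<delta>" using f_bound norm_ge_zero order_trans by blast
  obtain DA where dA: "((\<lambda>z. \<Sum>i\<le>2 * CARD('n). sigma_wt CARD('n) \<kappa> i *\<^sub>R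
      outer (f (sigma_pt \<kappa> z S i)) (f (sigma_pt \<kappa> z S i))) has_derivative DA) (at x)"
    and DA_bound: "\<And>u. norm (DA u) \<le> W * (2 * (\<delta> * (b * norm u)))"
    using has_derivative_ut_second_moment[OF f_deriv f'_bound f_bound] unfolding W_def by blast
  obtain Dm where dm: "((\<lambda>z. ut_mean \<kappa> f z S) has_derivative Dm) (at x)"
    and Dm_bound: "\<And>u. norm (Dm u) \<le> W * b * norm u"
    using has_derivative_ut_mean[OF f_deriv f'_bound] unfolding W_def by blast
  have "((\<lambda>z. ut_cov \<kappa> f z S) has_derivative (\<lambda>u. DA u - (outer m (Dm u) + outer (Dm u) m))) (at x)"
    unfolding ut_cov_def m_def
    by (rule has_derivative_diff[OF dA bounded_bilinear.FDERIV[OF bounded_bilinear_outer dm dm]])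
  moreover have "norm (DA u - (outer m (Dm u) + outer (Dm u) m)) \<le> 2 * W * \<delta> * b * (1 + W) * norm u"
    for u
  proof -
    have "norm m * norm (Dm u) \<le> (W * \<delta>) * (W * b * norm u)"
      using norm_ut_mean_le[OF f_bound] Dm_bound[of u] sigma_wt_abs_sum_nonneg \<open>0 \<le> \<delta>\<close>
      unfolding m_def W_def by (intro mult_mono) auto
    then have mean_part: "norm (outer m (Dm u) + outer (Dm u) m) \<le> 2 * ((W * \<delta>) * (W * b * norm u))"
      using norm_outer_add_outer_le[of m "Dm u"] by linarith
    have "norm (DA u - (outer m (Dm u) + outer (Dm u) m))
        \<le> W * (2 * (\<delta> * (b * norm u))) + 2 * ((W * \<delta>) * (W * b * norm u))"
      using norm_triangle_ineq4 DA_bound[of u] mean_part by (rule order_trans[OF _ add_mono])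
    also have "\<dots> = 2 * W * \<delta> * b * (1 + W) * norm u"
      by (simp add: algebra_simps)
    finally show ?thesis .
  qed
  ultimately show ?thesis using that unfolding W_def by blast
qed

lemma bounded_linear_column: "bounded_linear (column j :: real^('n::finite)^('m::finite) \<Rightarrow> real^'m)"
  by (rule linear_conv_bounded_linear[THEN iffD1], rule linearI) (simp_all add: vec_eq_iff column_def)

lemma norm_column_le: "norm (column j (A :: real^('n::finite)^('m::finite))) \<le> norm A"
  by (rule norm_le_componentwise_cart) (simp add: column_def component_le_norm_cart)

lemma loewner_le_scaled_identity:
  "loewner_le (c *\<^sub>R mat 1) A \<longleftrightarrow> (\<forall>v. c * (v \<bullet> v) \<le> v \<bullet> (A *v v))"
  "loewner_le A (c *\<^sub>R mat 1) \<longleftrightarrow> (\<forall>v. v \<bullet> (A *v v) \<le> c * (v \<bullet> v))"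
  by (simp_all add: loewner_le_def scaleR_matrix_vector_assoc[symmetric])

section \<open>Sigma points of the measurement update\<close>

lemma has_derivative_chol_predicted_cov:
  fixes f :: "real^('n::{finite,linorder}) \<Rightarrow> real^('n::{finite,linorder})" and Q S :: "real^('n::{finite,linorder})^('n::{finite,linorder})"
  assumes "0 < a"
    and f_deriv: "\<forall>z. (f has_derivative f' z) (at z)"
    and f_bound: "\<forall>z. norm (f z) \<le> \<delta>"
    and f'_bound: "\<forall>i. i \<le> 2 * CARD('n) \<longrightarrow> onorm (f' (sigma_pt \<kappa> x S i)) \<le> b"
    and Q: "transpose Q = Q"
    and "0 < \<sigma>l" and lower: "loewner_le (\<sigma>l *\<^sub>R mat 1) (ut_cov \<kappa> f x S + Q)"
    and upper: "loewner_le (ut_cov \<kappa> f x S + Q) (\<sigma>b *\<^sub>R mat 1)"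
  obtains D where "((\<lambda>z. chol (a *\<^sub>R (ut_cov \<kappa> f z S + Q))) has_derivative D) (at x)"
    and "\<And>u. norm (D u) \<le> sqrt (real CARD('n) * (a * \<sigma>b)) * (real CARD('n) / (a * \<sigma>l))
        * (a * (2 * sigma_wt_abs_sum \<kappa> CARD('n) * \<delta> * b * (1 + sigma_wt_abs_sum \<kappa> CARD('n))))
        * norm u"
proof -
  define C where "C = sqrt (real CARD('n) * (a * \<sigma>b)) * (real CARD('n) / (a * \<sigma>l))"
  define B where "B = 2 * sigma_wt_abs_sum \<kappa> CARD('n) * \<delta> * b * (1 + sigma_wt_abs_sum \<kappa> CARD('n))"
  obtain DC where dC: "((\<lambda>z. ut_cov \<kappa> f z S) has_derivative DC) (at x)"
    and DC_bound: "\<And>u. norm (DC u) \<le> B * norm u"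
    using has_derivative_ut_cov[OF f_deriv f'_bound f_bound] unfolding B_def by blast
  define M where "M z = a *\<^sub>R (ut_cov \<kappa> f z S + Q)" for z
  have dM: "(M has_derivative (\<lambda>u. a *\<^sub>R DC u)) (at x)"
    unfolding M_def by (intro has_derivative_scaleR_right has_derivative_add_const dC)
  have M_sym: "transpose (M z) = M z" for z
    using ut_cov_symmetric[of \<kappa> f z S] Q by (simp add: M_def transpose_scalar vec_eq_iff)
  have M_quad: "v \<bullet> (M x *v v) = a * (v \<bullet> ((ut_cov \<kappa> f x S + Q) *v v))" for v
    by (simp add: M_def scaleR_matrix_vector_assoc[symmetric])
  have M_lower: "\<forall>v. (a * \<sigma>l) * (v \<bullet> v) \<le> v \<bullet> (M x *v v)"
    and M_upper: "\<forall>v. v \<bullet> (M x *v v) \<le> (a * \<sigma>b) * (v \<bullet> v)"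
    using lower upper \<open>0 < a\<close> by (simp_all add: loewner_le_scaled_identity M_quad mult.assoc)
  obtain D where dchol: "((\<lambda>z. chol (M z)) has_derivative D) (at x)"
    and D_bound: "\<And>u. norm (D u) \<le> C * norm (a *\<^sub>R DC u)"
    using has_derivative_chol[OF dM M_sym _ M_lower M_upper] \<open>0 < a\<close> \<open>0 < \<sigma>l\<close>
    unfolding C_def by auto
  have "\<sigma>l \<le> \<sigma>b"
    using lower upper unfolding loewner_le_scaled_identity by (rule quadratic_form_bounds_le)
  then have "0 \<le> C"
    using \<open>0 < a\<close> \<open>0 < \<sigma>l\<close> by (simp add: C_def)
  have "norm (D u) \<le> C * (a * B) * norm u" for u
  proof -
    have "norm (a *\<^sub>R DC u) \<le> a * (B * norm u)"
      using DC_bound[of u] \<open>0 < a\<close> by simp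
    then show ?thesis
      using D_bound[of u] mult_left_mono[OF _ \<open>0 \<le> C\<close>] by (smt (verit) mult.assoc)
  qed
  then show ?thesis using that dchol unfolding M_def C_def B_def by blast
qed

definition sigma_pt_deriv_bound :: "real \<Rightarrow> nat \<Rightarrow> real \<Rightarrow> real \<Rightarrow> real \<Rightarrow> real \<Rightarrow> real" where
  "sigma_pt_deriv_bound \<kappa> n \<delta> b \<sigma>l \<sigma>b =
     (let W = sigma_wt_abs_sum \<kappa> n; a = real n + \<kappa>
      in W * b + sqrt (real n * (a * \<sigma>b)) * (real n / (a * \<sigma>l)) * (a * (2 * W * \<delta> * b * (1 + W))))"

lemma has_derivative_predicted_sigma_pt:
  fixes f :: "real^('n::{finite,linorder}) \<Rightarrow> real^('n::{finite,linorder})" and Q S :: "real^('n::{finite,linorder})^('n::{finite,linorder})"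
  assumes "0 < real CARD('n) + \<kappa>"
    and f_deriv: "\<forall>z. (f has_derivative f' z) (at z)"
    and f_bound: "\<forall>z. norm (f z) \<le> \<delta>"
    and f'_bound: "\<forall>i. i \<le> 2 * CARD('n) \<longrightarrow> onorm (f' (sigma_pt \<kappa> x S i)) \<le> b"
    and Q: "transpose Q = Q"
    and "0 < \<sigma>l" and lower: "loewner_le (\<sigma>l *\<^sub>R mat 1) (ut_cov \<kappa> f x S + Q)"
    and upper: "loewner_le (ut_cov \<kappa> f x S + Q) (\<sigma>b *\<^sub>R mat 1)"
  shows "\<exists>D. ((\<lambda>z. sigma_pt \<kappa> (ut_mean \<kappa> f z S) (ut_cov \<kappa> f z S + Q) i) has_derivative D) (at x)
           \<and> onorm D \<le> sigma_pt_deriv_bound \<kappa> CARD('n) \<delta> b \<sigma>l \<sigma>b"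
proof -
  define a where "a = real CARD('n) + \<kappa>"
  define W where "W = sigma_wt_abs_sum \<kappa> CARD('n)"
  define Cchol where "Cchol = sqrt (real CARD('n) * (a * \<sigma>b)) * (real CARD('n) / (a * \<sigma>l))
      * (a * (2 * W * \<delta> * b * (1 + W)))"
  obtain Dm where dm: "((\<lambda>z. ut_mean \<kappa> f z S) has_derivative Dm) (at x)"
    and Dm_bound: "\<And>u. norm (Dm u) \<le> W * b * norm u"
    using has_derivative_ut_mean[OF f_deriv f'_bound] unfolding W_def by blast
  obtain Dc where dc: "((\<lambda>z. chol (a *\<^sub>R (ut_cov \<kappa> f z S + Q))) has_derivative Dc) (at x)"
    and Dc_bound: "\<And>u. norm (Dc u) \<le> Cchol * norm u"
    using has_derivative_chol_predicted_cov[OF _ f_deriv f_bound f'_bound Q \<open>0 < \<sigma>l\<close> lower upper]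
      assms(1) unfolding a_def W_def Cchol_def by blast
  obtain s and j :: 'n where "\<bar>s\<bar> \<le> 1"
    and sp: "\<And>(x :: real^('n::{finite,linorder})) S.
      sigma_pt \<kappa> x S i = x + s *\<^sub>R column j (chol ((real CARD('n) + \<kappa>) *\<^sub>R S))"
    using sigma_pt_eq_column[of \<kappa> i] by blast
  have "((\<lambda>z. sigma_pt \<kappa> (ut_mean \<kappa> f z S) (ut_cov \<kappa> f z S + Q) i) has_derivative
      (\<lambda>u. Dm u + s *\<^sub>R column j (Dc u))) (at x)"
    unfolding sp a_def[symmetric]
    by (intro has_derivative_add dm has_derivative_scaleR_right
        bounded_linear.has_derivative[OF bounded_linear_column dc])
  moreover have "onorm (\<lambda>u. Dm u + s *\<^sub>R column j (Dc u)) \<le> W * b + Cchol"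
  proof (rule onorm_le)
    fix u
    have "norm (Dm u + s *\<^sub>R column j (Dc u)) \<le> norm (Dm u) + norm (Dc u)"
      using norm_column_le[of j "Dc u"] \<open>\<bar>s\<bar> \<le> 1\<close>
      by (smt (verit) mult_left_le_one_le norm_ge_zero norm_scaleR norm_triangle_ineq)
    then show "norm (Dm u + s *\<^sub>R column j (Dc u)) \<le> (W * b + Cchol) * norm u"
      using Dm_bound[of u] Dc_bound[of u] by (simp add: algebra_simps)
  qed
  moreover have "W * b + Cchol = sigma_pt_deriv_bound \<kappa> CARD('n) \<delta> b \<sigma>l \<sigma>b"
    by (simp add: sigma_pt_deriv_bound_def Let_def a_def W_def Cchol_def)
  ultimately show ?thesis by auto
qed

theorem lemma4:
  fixes \<kappa> :: real
    and f :: "real^('n::{finite,linorder}) \<Rightarrow> real^('n::{finite,linorder})" and f' :: "real^('n::{finite,linorder}) \<Rightarrow> real^('n::{finite,linorder}) \<Rightarrow> real^('n::{finite,linorder})"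
    and h :: "real^('n::{finite,linorder}) \<Rightarrow> real^'m::finite" and h' :: "real^('n::{finite,linorder}) \<Rightarrow> real^('n::{finite,linorder}) \<Rightarrow> real^'m"
    and g :: "real^('n::{finite,linorder}) \<Rightarrow> real^'p::finite" and g' :: "real^('n::{finite,linorder}) \<Rightarrow> real^('n::{finite,linorder}) \<Rightarrow> real^'p"
    \<comment> \<open>forward system\<close>
    and x w :: "nat \<Rightarrow> real^('n::{finite,linorder})" and y v :: "nat \<Rightarrow> real^'m"
    and Q :: "nat \<Rightarrow> real^('n::{finite,linorder})^('n::{finite,linorder})" and R :: "nat \<Rightarrow> real^'m^'m"
    \<comment> \<open>forward UKF: xhat k, Sig k; xp k = xhat_{k|k-1}, Pp k = Sigma_{k|k-1}, yp k = yhat_{k|k-1},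
        Sy k = Sigma^y_k, Sxy k = Sigma^xy_k, K k = K_k, F k = F_k, H k = H_k\<close>
    and xhat xp :: "nat \<Rightarrow> real^('n::{finite,linorder})" and Sig Pp :: "nat \<Rightarrow> real^('n::{finite,linorder})^('n::{finite,linorder})"
    and yp :: "nat \<Rightarrow> real^'m" and Sy :: "nat \<Rightarrow> real^'m^'m" and Sxy K :: "nat \<Rightarrow> real^'m^('n::{finite,linorder})"
    and F :: "nat \<Rightarrow> real^('n::{finite,linorder})^('n::{finite,linorder})" and H :: "nat \<Rightarrow> real^('n::{finite,linorder})^'m"
    and Ux :: "nat \<Rightarrow> real^('n::{finite,linorder})^('n::{finite,linorder})" and Uy :: "nat \<Rightarrow> real^'m^'m"
    and Uxyn :: "nat \<Rightarrow> real^('n::{finite,linorder})^('n::{finite,linorder})" and Uxym :: "nat \<Rightarrow> real^'m^'m"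
    and Qh :: "nat \<Rightarrow> real^('n::{finite,linorder})^('n::{finite,linorder})" and Rh :: "nat \<Rightarrow> real^'m^'m"
    \<comment> \<open>defender observation\<close>
    and a eps :: "nat \<Rightarrow> real^'p" and Rb :: "nat \<Rightarrow> real^'p^'p"
    \<comment> \<open>I-UKF: xx k = hat hat x_k, Pb k = bar Sigma_k, xxp k = hat hat x_{k|k-1}, Pbp k = bar Sigma_{k|k-1}\<close>
    and xx xxp :: "nat \<Rightarrow> real^('n::{finite,linorder})" and Pb Pbp :: "nat \<Rightarrow> real^('n::{finite,linorder})^('n::{finite,linorder})"
    and ap :: "nat \<Rightarrow> real^'p" and Sa :: "nat \<Rightarrow> real^'p^'p" and Sxa Kb :: "nat \<Rightarrow> real^'p^('n::{finite,linorder})"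
    and Ft :: "nat \<Rightarrow> real^('n::{finite,linorder})^('n::{finite,linorder})" and G :: "nat \<Rightarrow> real^('n::{finite,linorder})^'p"
    and Ua :: "nat \<Rightarrow> real^'p^'p" and Uxan :: "nat \<Rightarrow> real^('n::{finite,linorder})^('n::{finite,linorder})" and Uxap :: "nat \<Rightarrow> real^'p^'p"
    and Qbh :: "nat \<Rightarrow> real^('n::{finite,linorder})^('n::{finite,linorder})" and Rbh :: "nat \<Rightarrow> real^'p^'p"
    \<comment> \<open>constants\<close>
    and fb hb \<alpha>b \<beta>b \<gamma>b qb rb qh rh \<sigma>l \<sigma>b :: real
    and gb cb db \<epsilon>b ch dh pl pb :: real
    and yl \<delta>f \<delta>h abar :: real
  assumes kappa: "real CARD('n) + \<kappa> > 0"
    and f_deriv: "\<forall>z. (f has_derivative f' z) (at z)"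
    and h_deriv: "\<forall>z. (h has_derivative h' z) (at z)"
    and g_deriv: "\<forall>z. (g has_derivative g' z) (at z)"
    \<comment> \<open>forward system and defender observation\<close>
    and sys_x: "\<forall>k. x (Suc k) = f (x k) + w k"
    and sys_y: "\<forall>k. y k = h (x k) + v k"
    and sys_a: "\<forall>k. a k = g (xhat k) + eps k"
    and covQ: "\<forall>k. transpose (Q k) = Q k \<and> loewner_le 0 (Q k)"
    and covR: "\<forall>k. transpose (R k) = R k \<and> loewner_le 0 (R k)"
    and covRb: "\<forall>k. transpose (Rb k) = Rb k \<and> loewner_le 0 (Rb k)"
    \<comment> \<open>forward UKF recursion\<close>
    and ukf_xp: "\<forall>k. xp (Suc k) = ut_mean \<kappa> f (xhat k) (Sig k)"
    and ukf_Pp: "\<forall>k. Pp (Suc k) = ut_cov \<kappa> f (xhat k) (Sig k) + Q k"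
    and ukf_yp: "\<forall>k. yp (Suc k) = ut_mean \<kappa> h (xp (Suc k)) (Pp (Suc k))"
    and ukf_Sy: "\<forall>k. Sy (Suc k) = ut_cov \<kappa> h (xp (Suc k)) (Pp (Suc k)) + R (Suc k)"
    and ukf_Sxy: "\<forall>k. Sxy (Suc k) = ut_cross \<kappa> h (xp (Suc k)) (Pp (Suc k))"
    and ukf_K: "\<forall>k. K (Suc k) = Sxy (Suc k) ** matrix_inv (Sy (Suc k))"
    and ukf_x: "\<forall>k. xhat (Suc k) = xp (Suc k) + K (Suc k) *v (y (Suc k) - yp (Suc k))"
    and ukf_S: "\<forall>k. Sig (Suc k) = Pp (Suc k) - K (Suc k) ** Sy (Suc k) ** transpose (K (Suc k))"
    and F_def: "\<forall>k. F k = matrix (f' (xhat k))"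
    and H_def: "\<forall>k. H (Suc k) = matrix (h' (xp (Suc k)))"
    \<comment> \<open>unknown matrices of the forward UKF error dynamics\<close>
    and Ux_diag: "\<forall>k. diag_mat (Ux k)" and Uy_diag: "\<forall>k. diag_mat (Uy k)"
    and Ux_eq: "\<forall>k. x (Suc k) - xp (Suc k) = (Ux k ** F k) *v (x k - xhat k) + w k"
    and Uy_eq: "\<forall>k. y (Suc k) - yp (Suc k) = (Uy (Suc k) ** H (Suc k)) *v (x (Suc k) - xp (Suc k)) + v (Suc k)"
    and Uxy_eq: "\<forall>k. Sxy (Suc k) =
       (if CARD('m) \<le> CARD('n)
        then Pp (Suc k) ** Uxyn (Suc k) ** transpose (H (Suc k)) ** Uy (Suc k)
        else Pp (Suc k) ** transpose (H (Suc k)) ** Uy (Suc k) ** Uxym (Suc k))"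
    and Qh_eq: "\<forall>k. Pp (Suc k) =
       Ux k ** F k ** (mat 1 - K k ** Uy k ** H k) ** Pp k
         ** transpose (mat 1 - K k ** Uy k ** H k) ** transpose (F k) ** Ux k + Qh k"
    and Rh_eq: "\<forall>k. Sy (Suc k) =
       Uy (Suc k) ** H (Suc k) ** Pp (Suc k) ** transpose (H (Suc k)) ** Uy (Suc k) + Rh (Suc k)"
    \<comment> \<open>I-UKF recursion (process noise K_{k+1} v_{k+1}, covariance K R K^T)\<close>
    and iukf_xp: "\<forall>k. xxp (Suc k) = ut_mean \<kappa> (itrans \<kappa> f h (Q k) (Sig k) (K (Suc k)) (x (Suc k))) (xx k) (Pb k)"
    and iukf_Pp: "\<forall>k. Pbp (Suc k) = ut_cov \<kappa> (itrans \<kappa> f h (Q k) (Sig k) (K (Suc k)) (x (Suc k))) (xx k) (Pb k)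
                          + K (Suc k) ** R (Suc k) ** transpose (K (Suc k))"
    and iukf_ap: "\<forall>k. ap (Suc k) = ut_mean \<kappa> g (xxp (Suc k)) (Pbp (Suc k))"
    and iukf_Sa: "\<forall>k. Sa (Suc k) = ut_cov \<kappa> g (xxp (Suc k)) (Pbp (Suc k)) + Rb (Suc k)"
    and iukf_Sxa: "\<forall>k. Sxa (Suc k) = ut_cross \<kappa> g (xxp (Suc k)) (Pbp (Suc k))"
    and iukf_K: "\<forall>k. Kb (Suc k) = Sxa (Suc k) ** matrix_inv (Sa (Suc k))"
    and iukf_x: "\<forall>k. xx (Suc k) = xxp (Suc k) + Kb (Suc k) *v (a (Suc k) - ap (Suc k))"
    and iukf_S: "\<forall>k. Pb (Suc k) = Pbp (Suc k) - Kb (Suc k) ** Sa (Suc k) ** transpose (Kb (Suc k))"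
    and Ft_def: "\<forall>k. (itrans \<kappa> f h (Q k) (Sig k) (K (Suc k)) (x (Suc k)) has_derivative (\<lambda>u. Ft k *v u)) (at (xx k))"
    and G_def: "\<forall>k. G k = matrix (g' (xxp k))"
    \<comment> \<open>unknown matrices of the I-UKF\<close>
    and Ua_diag: "\<forall>k. diag_mat (Ua k)"
    and Ua_eq: "\<forall>k. a (Suc k) - ap (Suc k) = (Ua (Suc k) ** G (Suc k)) *v (xhat (Suc k) - xxp (Suc k)) + eps (Suc k)"
    and Uxa_eq: "\<forall>k. Sxa (Suc k) =
       (if CARD('p) \<le> CARD('n)
        then Pbp (Suc k) ** Uxan (Suc k) ** transpose (G (Suc k)) ** Ua (Suc k)
        else Pbp (Suc k) ** transpose (G (Suc k)) ** Ua (Suc k) ** Uxap (Suc k))"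
    and Qbh_eq: "\<forall>k. Pbp (Suc k) =
       Ft k ** (mat 1 - Kb k ** Ua k ** G k) ** Pbp k
         ** transpose (mat 1 - Kb k ** Ua k ** G k) ** transpose (Ft k) + Qbh k"
    and Rbh_eq: "\<forall>k. Sa (Suc k) =
       Ua (Suc k) ** G (Suc k) ** Pbp (Suc k) ** transpose (G (Suc k)) ** Ua (Suc k) + Rbh (Suc k)"
    \<comment> \<open>(C1)\<close>
    and C1_pos: "fb > 0" "hb > 0" "\<alpha>b > 0" "\<beta>b > 0" "\<gamma>b > 0" "qb > 0" "rb > 0"
                "qh > 0" "rh > 0" "\<sigma>l > 0" "\<sigma>b > 0"
    and C1: "\<forall>k. mnorm (F k) \<le> fb \<and> mnorm (H k) \<le> hb \<and> mnorm (Ux k) \<le> \<alpha>b \<and> mnorm (Uy k) \<le> \<beta>b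
              \<and> (if CARD('m) \<le> CARD('n) then mnorm (Uxyn k) else mnorm (Uxym k)) \<le> \<gamma>b
              \<and> loewner_le (Q k) (qb *\<^sub>R mat 1) \<and> loewner_le (R k) (rb *\<^sub>R mat 1)
              \<and> loewner_le (qh *\<^sub>R mat 1) (Qh k) \<and> loewner_le (rh *\<^sub>R mat 1) (Rh k)
              \<and> loewner_le (\<sigma>l *\<^sub>R mat 1) (Pp k) \<and> loewner_le (Pp k) (\<sigma>b *\<^sub>R mat 1)"
    \<comment> \<open>(C2)\<close>
    and C2: "\<forall>k. invertible (Ux k) \<and> invertible (F k)"
    \<comment> \<open>(C3)\<close>
    and C3: "\<sigma>b * \<gamma>b * hb\<^sup>2 * \<beta>b\<^sup>2 < rh"
    \<comment> \<open>(C4)\<close>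
    and C4_pos: "gb > 0" "cb > 0" "db > 0" "\<epsilon>b > 0" "ch > 0" "dh > 0" "pl > 0" "pb > 0"
    and C4: "\<forall>k. mnorm (G k) \<le> gb \<and> mnorm (Ua k) \<le> cb
              \<and> (if CARD('p) \<le> CARD('n) then mnorm (Uxan k) else mnorm (Uxap k)) \<le> db
              \<and> loewner_le (Rb k) (\<epsilon>b *\<^sub>R mat 1)
              \<and> loewner_le (ch *\<^sub>R mat 1) (Qbh k) \<and> loewner_le (dh *\<^sub>R mat 1) (Rbh k)
              \<and> loewner_le (pl *\<^sub>R mat 1) (Pbp k) \<and> loewner_le (Pbp k) (pb *\<^sub>R mat 1)"
    \<comment> \<open>(C5)\<close>
    and C5: "\<forall>k. loewner_le (yl *\<^sub>R mat 1) (Sy k)"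
    \<comment> \<open>(C6)\<close>
    and C6: "\<forall>z. norm (f z) \<le> \<delta>f" "\<forall>z. norm (h z) \<le> \<delta>h"
    \<comment> \<open>(C7)\<close>
    and C7: "\<forall>k. invertible (Ft k) \<and> mnorm (matrix_inv (Ft k)) \<le> abar"
    \<comment> \<open>(C8)\<close>
    and C8: "pb * db * gb\<^sup>2 * cb\<^sup>2 < dh"
    \<comment> \<open>standing: Jacobian bounds at the (forward-UKF) sigma points\<close>
    and f_sig: "\<forall>k i. i \<le> 2 * CARD('n) \<longrightarrow> onorm (f' (sigma_pt \<kappa> (xhat k) (Sig k) i)) \<le> fb"
    and h_sig: "\<forall>k i. i \<le> 2 * CARD('n) \<longrightarrow> onorm (h' (sigma_pt \<kappa> (xp (Suc k)) (Pp (Suc k)) i)) \<le> hb"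
  shows "\<exists>c'>0. \<forall>k i. i \<le> 2 * CARD('n) \<longrightarrow>
           (\<exists>D. ((\<lambda>z. sigma_pt \<kappa> (ut_mean \<kappa> f z (Sig k)) (ut_cov \<kappa> f z (Sig k) + Q k) i)
                   has_derivative D) (at (xhat k))
                \<and> onorm D \<le> c')"
proof -
  define c where "c = sigma_pt_deriv_bound \<kappa> CARD('n) \<delta>f fb \<sigma>l \<sigma>b"
  have bounded: "\<exists>D. ((\<lambda>z. sigma_pt \<kappa> (ut_mean \<kappa> f z (Sig k)) (ut_cov \<kappa> f z (Sig k) + Q k) i)
      has_derivative D) (at (xhat k)) \<and> onorm D \<le> c" for k i
  proof -
    have "\<forall>i. i \<le> 2 * CARD('n) \<longrightarrow> onorm (f' (sigma_pt \<kappa> (xhat k) (Sig k) i)) \<le> fb"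
      using f_sig by blast
    moreover have "transpose (Q k) = Q k" using covQ by blast
    moreover have "loewner_le (\<sigma>l *\<^sub>R mat 1) (ut_cov \<kappa> f (xhat k) (Sig k) + Q k)"
      and "loewner_le (ut_cov \<kappa> f (xhat k) (Sig k) + Q k) (\<sigma>b *\<^sub>R mat 1)"
      using C1 ukf_Pp by metis+
    ultimately show ?thesis
      unfolding c_def by (rule has_derivative_predicted_sigma_pt[OF kappa f_deriv C6(1) _ _ C1_pos(10)])
  qed
  show ?thesis
  proof (intro exI[of _ "max 1 c"] conjI allI impI)
    fix k i
    show "\<exists>D. ((\<lambda>z. sigma_pt \<kappa> (ut_mean \<kappa> f z (Sig k)) (ut_cov \<kappa> f z (Sig k) + Q k) i)
        has_derivative D) (at (xhat k)) \<and> onorm D \<le> max 1 c"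
      using bounded[of k i] by (meson max.coboundedI2)
  qed simp
qed

end
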